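(* Let $m\ge1$, $\mathbb{M}=\mathbb{R}$ or $\mathbb{T}$, $a_1,\dots,a_{2m},b_1,\dots,b_{2m}\in\mathbb{C}$, and let $u$ satisfy $$D_t u=D_x^{2m}u+\sum_{j=1}^{2m}\big(a_jD_x^{2m-j}u+b_jD_x^{2m-j}\bar u\big)$$ on $\mathbb{M}$. Then there exists $C>0$ depending only on $\{a_j\},\{b_j\}$ such that $$\Big|\frac{d}{dt}\Big(\|P^+u\|^2+\sum_{j=1}^{2m-1}\mathrm{Re}\,\alpha_j\langle D_x^{-j}\overline{P^-u},P^+u\rangle\Big)+\sum_{j=1}^{2m-1}\big(\lambda_j^+\||\partial_x|^{m-j/2}P^+u\|^2+\lambda_j^-\||\partial_x|^{m-j/2}P^-u\|^2\big)\Big|\le C\|u\|^2$$ and $$\Big|\frac{d}{dt}\Big(\|P^-u\|^2+\sum_{j=1}^{2m-1}\mathrm{Re}\,\alpha_j\langle D_x^{-j}\overline{P^+u},P^-u\rangle\Big)+\sum_{j=1}^{2m-1}(-1)^j\big(\lambda_j^+\||\partial_x|^{m-j/2}P^-u\|^2+\lambda_j^-\||\partial_x|^{m-j/2}P^+u\|^2\big)\Big|\le C\|u\|^2.$$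
   Context: $D_t=-i\partial_t$, $D_x=-i\partial_x$; $\|\cdot\|$ is the $L^2(\mathbb{M})$ norm and $\langle f,g\rangle=\int f\bar g\,dx$. Fourier multipliers: $D_x^s$ has symbol $\xi^s$, $|\partial_x|^s$ has symbol $|\xi|^s$; $P^+f=\mathcal{F}^{-1}(\chi(\xi\ge1)\mathcal{F}f)$, $P^-f=\mathcal{F}^{-1}(\chi(\xi\le-1)\mathcal{F}f)$. Empty sums are zero. Constants: $\alpha_j=b_j-\frac12\sum_{k=1}^{j-1}(1+(-1)^{j-k})\bar a_{j-k}\alpha_k$, $\lambda_j^+=2\,\mathrm{Im}\,a_j+\sum_{k=1}^{j-1}(-1)^{j-k+1}\mathrm{Im}(\bar b_{j-k}\alpha_k)$, $\lambda_j^-=-\sum_{k=1}^{j-1}\mathrm{Im}(\bar b_{j-k}\alpha_k)$, for $1\le j\le 2m-1$. $u$ is assumed regular enough for all quantities to make sense. *)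

theory Defs
  imports "HOL-Analysis.Analysis"
begin

text \<open>Everything is expressed on the Fourier side (frequency variable xi).
  For M = R the frequency space is R with Lebesgue measure; for M = T it is
  the integers with counting measure.  A function u(x) is represented by its
  Fourier transform / Fourier coefficients; by Plancherel, L2 norms and
  inner products are computed on the frequency side (normalisation constant 1).\<close>

datatype domain = Line | Torus

fun freq :: "domain \<Rightarrow> real measure" where
  "freq Line = lborel"
| "freq Torus = count_space \<int>"

definition Dx :: "int \<Rightarrow> (real \<Rightarrow> complex) \<Rightarrow> real \<Rightarrow> complex" where
  "Dx s f \<xi> = (complex_of_real \<xi>) powi s * f \<xi>"

definition absDx :: "real \<Rightarrow> (real \<Rightarrow> complex) \<Rightarrow> real \<Rightarrow> complex" where
  "absDx s f \<xi> = complex_of_real (\<bar>\<xi>\<bar> powr s) * f \<xi>"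

definition Pplus :: "(real \<Rightarrow> complex) \<Rightarrow> real \<Rightarrow> complex" where
  "Pplus f \<xi> = (if \<xi> \<ge> 1 then f \<xi> else 0)"

definition Pminus :: "(real \<Rightarrow> complex) \<Rightarrow> real \<Rightarrow> complex" where
  "Pminus f \<xi> = (if \<xi> \<le> -1 then f \<xi> else 0)"

text \<open>Fourier transform of the complex conjugate of u, in terms of that of u.\<close>
definition conjF :: "(real \<Rightarrow> complex) \<Rightarrow> real \<Rightarrow> complex" where
  "conjF f \<xi> = cnj (f (- \<xi>))"

definition inner_L2 :: "real measure \<Rightarrow> (real \<Rightarrow> complex) \<Rightarrow> (real \<Rightarrow> complex) \<Rightarrow> complex" where
  "inner_L2 \<mu> f g = (\<integral>\<xi>. f \<xi> * cnj (g \<xi>) \<partial>\<mu>)"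

definition normsq :: "real measure \<Rightarrow> (real \<Rightarrow> complex) \<Rightarrow> real" where
  "normsq \<mu> f = (\<integral>\<xi>. (cmod (f \<xi>))\<^sup>2 \<partial>\<mu>)"

function alpha :: "(nat \<Rightarrow> complex) \<Rightarrow> (nat \<Rightarrow> complex) \<Rightarrow> nat \<Rightarrow> complex" where
  "alpha a b j = b j - (1/2) * (\<Sum>k\<in>{1..<j}. (1 + (-1) ^ (j - k)) * cnj (a (j - k)) * alpha a b k)"
  by auto
termination by (relation "Wellfounded.measure (\<lambda>(a, b, j). j)") auto

definition lam_plus :: "(nat \<Rightarrow> complex) \<Rightarrow> (nat \<Rightarrow> complex) \<Rightarrow> nat \<Rightarrow> real" where
  "lam_plus a b j = 2 * Im (a j) +
     (\<Sum>k\<in>{1..<j}. (-1) ^ (j - k + 1) * Im (cnj (b (j - k)) * alpha a b k))"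

definition lam_minus :: "(nat \<Rightarrow> complex) \<Rightarrow> (nat \<Rightarrow> complex) \<Rightarrow> nat \<Rightarrow> real" where
  "lam_minus a b j = - (\<Sum>k\<in>{1..<j}. Im (cnj (b (j - k)) * alpha a b k))"

end

theory Submission
  imports Defs
begin

text \<open>On the Fourier side the equation decouples: for each \<xi> \<ge> 1 the values p = v(\<xi>) and
  q = v(-\<xi>) of the Fourier transform v of u satisfy a linear system whose coefficients are
  polynomials of degree 2m in \<xi>. The correction terms Re (\<alpha>_j \<xi>^(-j) conj q conj p) added to
  |p|^2 are chosen so that, in the time derivative of the resulting energy density, every term of
  order \<xi>^(2m-n) with 1 \<le> n < 2m equals -(\<lambda>_n^+ |p|^2 + \<lambda>_n^- |q|^2) \<xi>^(2m-n); all remaining terms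
  carry a non-positive power of \<xi> and are bounded by C (|p|^2 + |q|^2). Integrating over \<xi> \<ge> 1,
  where the time derivative passes under the integral by dominated convergence thanks to the weighted
  bound on v, gives the first estimate. The second one is the first one applied to u(-x).\<close>

declare alpha.simps [simp del]

section \<open>The energy identity at a pair of frequencies\<close>

text \<open>With \<open>N = 2 m\<close>, \<open>x = \<xi> \<ge> 1\<close>, \<open>p = v \<xi>\<close> and \<open>q = v (- \<xi>)\<close>, the equation reads
  \<open>p' = rhs_pos N a b x p q\<close> and \<open>q' = rhs_neg N a b x p q\<close>.\<close>

definition rhs_pos :: "nat \<Rightarrow> (nat \<Rightarrow> complex) \<Rightarrow> (nat \<Rightarrow> complex) \<Rightarrow> real \<Rightarrow> complex \<Rightarrow> complex \<Rightarrow> complex" where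
  "rhs_pos N A B x p q =
     \<i> * (of_real (x ^ N) * p + (\<Sum>k=1..N. of_real (x ^ (N - k)) * (A k * p + B k * cnj q)))"

definition rhs_neg :: "nat \<Rightarrow> (nat \<Rightarrow> complex) \<Rightarrow> (nat \<Rightarrow> complex) \<Rightarrow> real \<Rightarrow> complex \<Rightarrow> complex \<Rightarrow> complex" where
  "rhs_neg N A B x p q =
     \<i> * (of_real (x ^ N) * q + (\<Sum>k=1..N. (-1) ^ k * of_real (x ^ (N - k)) * (A k * q + B k * cnj p)))"

text \<open>The integrand at \<open>\<xi> \<ge> 1\<close> of the modified energy in the first estimate.\<close>

definition energy_density :: "nat \<Rightarrow> (nat \<Rightarrow> complex) \<Rightarrow> (nat \<Rightarrow> complex) \<Rightarrow> real \<Rightarrow> complex \<Rightarrow> complex \<Rightarrow> real" where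
  "energy_density N A B x p q =
     (cmod p)\<^sup>2 + (\<Sum>j\<in>{1..<N}. Re (alpha A B j * (of_real (1 / x ^ j) * cnj q * cnj p)))"

definition energy_rate :: "nat \<Rightarrow> (nat \<Rightarrow> complex) \<Rightarrow> (nat \<Rightarrow> complex) \<Rightarrow> real \<Rightarrow>
    complex \<Rightarrow> complex \<Rightarrow> complex \<Rightarrow> complex \<Rightarrow> real" where
  "energy_rate N A B x p q p' q' =
     Re (p' * cnj p + p * cnj p')
     + (\<Sum>j\<in>{1..<N}. Re (alpha A B j * (of_real (1 / x ^ j) * (cnj q' * cnj p + cnj q * cnj p'))))"

lemma has_real_derivative_energy_density:
  assumes p: "(p has_vector_derivative p') (at s)" and q: "(q has_vector_derivative q') (at s)"
  shows "((\<lambda>\<tau>. energy_density N A B x (p \<tau>) (q \<tau>)) has_real_derivative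
           energy_rate N A B x (p s) (q s) p' q') (at s)"
proof -
  define c where "c j = complex_of_real (1 / x ^ j)" for j
  define Z where "Z \<tau> = p \<tau> * cnj (p \<tau>) + (\<Sum>j\<in>{1..<N}. alpha A B j * (c j * cnj (q \<tau>) * cnj (p \<tau>)))" for \<tau>
  have density: "energy_density N A B x (p \<tau>) (q \<tau>) = Re (Z \<tau>)" for \<tau>
    unfolding energy_density_def Z_def c_def by (simp add: Re_sum complex_mult_cnj cmod_power2)
  have "(Z has_vector_derivative
          p s * cnj p' + p' * cnj (p s)
          + (\<Sum>j\<in>{1..<N}. alpha A B j * (c j * cnj (q s) * cnj p' + c j * cnj q' * cnj (p s)))) (at s)"
    unfolding Z_def
    by (intro has_vector_derivative_add has_vector_derivative_mult has_vector_derivative_sum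
          has_vector_derivative_mult_right has_vector_derivative_cnj p q)
  from bounded_linear.has_vector_derivative[OF bounded_linear_Re this]
  show ?thesis
    unfolding density has_real_derivative_iff_has_vector_derivative energy_rate_def c_def
    by (simp add: Re_sum algebra_simps)
qed

lemma Im_minus_one_power_mult: "Im ((-1) ^ k * z) = (-1) ^ k * Im z"
  by (cases "even k") auto

lemma Im_one_plus_minus_one_power_mult: "Im ((1 + (-1) ^ k) * z) = (1 + (-1) ^ k) * Im z"
  by (cases "even k") auto

lemma Im_of_real_mult: "Im (of_real r * z) = r * Im z"
  by simp

lemma Im_mult_cnj_self: "Im (c * (p * cnj p)) = Im c * (cmod p)\<^sup>2"
  by (simp add: complex_mult_cnj cmod_power2)

definition self_coeff :: "(nat \<Rightarrow> complex) \<Rightarrow> (nat \<Rightarrow> complex) \<Rightarrow> complex \<Rightarrow> complex \<Rightarrow> nat \<Rightarrow> real" where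
  "self_coeff A B p q k = -2 * (Im (A k) * (cmod p)\<^sup>2 + Im (B k * (cnj p * cnj q)))"

definition cross_coeff :: "(nat \<Rightarrow> complex) \<Rightarrow> (nat \<Rightarrow> complex) \<Rightarrow> complex \<Rightarrow> complex \<Rightarrow> nat \<Rightarrow> nat \<Rightarrow> real" where
  "cross_coeff A B p q j k =
     (1 + (-1) ^ k) * Im (alpha A B j * cnj (A k) * (cnj p * cnj q))
     + (-1) ^ k * Im (alpha A B j * cnj (B k)) * (cmod p)\<^sup>2 + Im (alpha A B j * cnj (B k)) * (cmod q)\<^sup>2"

lemma Re_rhs_pos_mult_cnj:
  "Re (rhs_pos N A B x p q * cnj p + p * cnj (rhs_pos N A B x p q))
     = (\<Sum>k=1..N. x ^ (N - k) * self_coeff A B p q k)"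
proof -
  let ?pd = "rhs_pos N A B x p q"
  have "?pd * cnj p = \<i> * (of_real (x ^ N) * (p * cnj p)
          + (\<Sum>k=1..N. of_real (x ^ (N - k)) * (A k * (p * cnj p) + B k * (cnj p * cnj q))))"
    unfolding rhs_pos_def
    by (simp add: algebra_simps sum_distrib_left sum_distrib_right del: of_real_power)
  then have "Re (?pd * cnj p)
      = - (\<Sum>k=1..N. x ^ (N - k) * (Im (A k) * (cmod p)\<^sup>2 + Im (B k * (cnj p * cnj q))))"
    by (simp only: Re_i_times Im_sum Im_of_real_mult distrib_left plus_complex.sel
        Im_mult_cnj_self complex_In_mult_cnj_zero mult_zero_right add_0 sum.distrib) simp
  moreover have "Re (p * cnj ?pd) = Re (?pd * cnj p)"
    by (metis complex_cnj_cnj complex_cnj_mult mult.commute cnj.sel(1))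
  ultimately show ?thesis
    unfolding self_coeff_def by (simp add: sum_distrib_left algebra_simps sum_negf)
qed

lemma Re_alpha_mult_rhs_cross:
  "Re (alpha A B j * (of_real r * (cnj (rhs_neg N A B x p q) * cnj p + cnj q * cnj (rhs_pos N A B x p q))))
     = r * (x ^ N * (2 * Im (alpha A B j * (cnj p * cnj q)))
            + (\<Sum>k=1..N. x ^ (N - k) * cross_coeff A B p q j k))"
proof -
  define w where "w = cnj p * cnj q"
  define c where "c = alpha A B j"
  define Y where "Y = of_real (x ^ N) * (2 * w) + (\<Sum>k=1..N. of_real (x ^ (N - k)) *
     ((1 + (-1) ^ k) * (cnj (A k) * w) + (-1) ^ k * (cnj (B k) * (p * cnj p)) + cnj (B k) * (q * cnj q)))"
  have "cnj (rhs_neg N A B x p q) * cnj p + cnj q * cnj (rhs_pos N A B x p q) = - \<i> * Y"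
    unfolding rhs_pos_def rhs_neg_def Y_def w_def
    by (simp add: cnj_sum algebra_simps sum_distrib_left sum_distrib_right sum.distrib del: of_real_power)
  moreover have "Re (c * (of_real r * (- \<i> * Y))) = r * Im (c * Y)"
    by (simp add: algebra_simps)
  moreover have "Im (c * (of_real t * ((1 + (-1) ^ k) * (a * w) + (-1) ^ k * (b * (p * cnj p)) + b * (q * cnj q))))
      = t * ((1 + (-1) ^ k) * Im (c * a * w) + (-1) ^ k * Im (c * b) * (cmod p)\<^sup>2 + Im (c * b) * (cmod q)\<^sup>2)"
    for t k a b
  proof -
    have "c * (of_real t * ((1 + (-1) ^ k) * (a * w) + (-1) ^ k * (b * (p * cnj p)) + b * (q * cnj q)))
        = of_real t * ((1 + (-1) ^ k) * (c * a * w) + (-1) ^ k * ((c * b) * (p * cnj p)) + (c * b) * (q * cnj q))"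
      by (simp only: algebra_simps)
    then show ?thesis
      by (simp only: Im_of_real_mult plus_complex.sel Im_one_plus_minus_one_power_mult
          Im_minus_one_power_mult Im_mult_cnj_self) (simp only: mult.assoc)
  qed
  moreover have "Im (c * (of_real (x ^ N) * (2 * w))) = x ^ N * (2 * Im (c * w))"
    by (simp add: algebra_simps)
  ultimately show ?thesis
    unfolding c_def[symmetric] w_def[symmetric] cross_coeff_def Y_def
      distrib_left[of c] sum_distrib_left[of c] plus_complex.sel Im_sum
    by (simp only:)
qed

text \<open>The recursion defining \<open>alpha\<close> and the formulas for \<open>lam_plus\<close>, \<open>lam_minus\<close> are
  exactly what makes the coefficient of \<open>x ^ (N - n)\<close>, \<open>1 \<le> n < N\<close>, vanish in the expansion below.\<close>

lemma lambda_cancellation: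
  "self_coeff A B p q n + 2 * Im (alpha A B n * (cnj p * cnj q))
     + (lam_plus A B n * (cmod p)\<^sup>2 + lam_minus A B n * (cmod q)\<^sup>2)
     + (\<Sum>j\<in>{1..<n}. cross_coeff A B p q j (n - j)) = 0"
proof -
  define w where "w = cnj p * cnj q"
  define S where "S = (\<Sum>k\<in>{1..<n}. (1 + (-1) ^ (n - k)) * cnj (A (n - k)) * alpha A B k)"
  have alpha_n: "alpha A B n = B n - 1/2 * S"
    unfolding S_def by (rule alpha.simps)
  have s1: "(\<Sum>j\<in>{1..<n}. (1 + (-1) ^ (n - j)) * Im (alpha A B j * cnj (A (n - j)) * w)) = Im (S * w)"
    unfolding S_def sum_distrib_right Im_sum
  proof (rule sum.cong[OF refl])
    fix j
    have "(1 + (-1) ^ (n - j)) * cnj (A (n - j)) * alpha A B j * w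
        = (1 + (-1) ^ (n - j)) * (alpha A B j * cnj (A (n - j)) * w)"
      by (simp only: mult_ac)
    then show "(1 + (-1) ^ (n - j)) * Im (alpha A B j * cnj (A (n - j)) * w)
        = Im ((1 + (-1) ^ (n - j)) * cnj (A (n - j)) * alpha A B j * w)"
      by (simp only: Im_one_plus_minus_one_power_mult)
  qed
  have s2: "(\<Sum>j\<in>{1..<n}. (-1) ^ (n - j) * Im (alpha A B j * cnj (B (n - j))) * (cmod p)\<^sup>2)
      = - (\<Sum>k\<in>{1..<n}. (-1) ^ (n - k + 1) * Im (cnj (B (n - k)) * alpha A B k)) * (cmod p)\<^sup>2"
    unfolding sum_distrib_right sum_negf[symmetric]
    by (rule sum.cong[OF refl]) (simp add: mult.commute)
  have s3: "(\<Sum>j\<in>{1..<n}. Im (alpha A B j * cnj (B (n - j))) * (cmod q)\<^sup>2)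
      = (\<Sum>k\<in>{1..<n}. Im (cnj (B (n - k)) * alpha A B k)) * (cmod q)\<^sup>2"
    unfolding sum_distrib_right by (rule sum.cong[OF refl]) (simp add: mult.commute)
  have "(\<Sum>j\<in>{1..<n}. cross_coeff A B p q j (n - j))
      = Im (S * w) - (\<Sum>k\<in>{1..<n}. (-1) ^ (n - k + 1) * Im (cnj (B (n - k)) * alpha A B k)) * (cmod p)\<^sup>2
        + (\<Sum>k\<in>{1..<n}. Im (cnj (B (n - k)) * alpha A B k)) * (cmod q)\<^sup>2"
    unfolding cross_coeff_def w_def[symmetric] sum.distrib s1 s2 s3 by simp
  moreover have "Im (alpha A B n * w) = Im (B n * w) - 1/2 * Im (S * w)"
    unfolding alpha_n by (simp add: algebra_simps)
  ultimately show ?thesis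
    unfolding lam_plus_def lam_minus_def self_coeff_def w_def[symmetric] by (simp add: algebra_simps)
qed

lemma sum_triangle_reindex:
  fixes g :: "nat \<Rightarrow> nat \<Rightarrow> 'a::comm_monoid_add"
  shows "(\<Sum>j\<in>{1..<M}. \<Sum>k\<in>{1..<M - j}. g j k) = (\<Sum>n\<in>{1..<M}. \<Sum>j\<in>{1..<n}. g j (n - j))"
proof (induction M)
  case (Suc M)
  show ?case
  proof (cases "M = 0")
    case False
    have "(\<Sum>j\<in>{1..<Suc M}. \<Sum>k\<in>{1..<Suc M - j}. g j k)
        = (\<Sum>j\<in>{1..<M}. (\<Sum>k\<in>{1..<M - j}. g j k) + g j (M - j))"
      using False
      by (auto simp: sum.atLeastLessThan_Suc Suc_diff_le intro!: sum.cong)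
    also have "\<dots> = (\<Sum>n\<in>{1..<M}. \<Sum>j\<in>{1..<n}. g j (n - j)) + (\<Sum>j\<in>{1..<M}. g j (M - j))"
      by (simp only: sum.distrib Suc.IH)
    also have "\<dots> = (\<Sum>n\<in>{1..<Suc M}. \<Sum>j\<in>{1..<n}. g j (n - j))"
      using False by (simp add: sum.atLeastLessThan_Suc)
    finally show ?thesis .
  qed simp
qed simp

lemma sum_divide_power_regroup:
  fixes x :: real and T :: "nat \<Rightarrow> real" and F :: "nat \<Rightarrow> nat \<Rightarrow> real"
  assumes x: "x > 0"
  shows "(\<Sum>j\<in>{1..<N}. 1 / x ^ j * (x ^ N * T j + (\<Sum>k=1..N. x ^ (N - k) * F j k)))
      = (\<Sum>j\<in>{1..<N}. x ^ (N - j) * T j)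
        + (\<Sum>n\<in>{1..<N}. x ^ (N - n) * (\<Sum>j\<in>{1..<n}. F j (n - j)))
        + (\<Sum>j\<in>{1..<N}. \<Sum>k\<in>{N - j..N}. x ^ (N - k) / x ^ j * F j k)"
proof -
  have split: "1 / x ^ j * (x ^ N * T j + (\<Sum>k=1..N. x ^ (N - k) * F j k))
      = x ^ (N - j) * T j + (\<Sum>k\<in>{1..<N - j}. x ^ (N - k) / x ^ j * F j k)
        + (\<Sum>k\<in>{N - j..N}. x ^ (N - k) / x ^ j * F j k)" if j: "j \<in> {1..<N}" for j
  proof -
    have "{1..N} = {1..<N - j} \<union> {N - j..N}" "{1..<N - j} \<inter> {N - j..N} = {}"
      using j by auto
    then have "(\<Sum>k=1..N. x ^ (N - k) / x ^ j * F j k)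
        = (\<Sum>k\<in>{1..<N - j}. x ^ (N - k) / x ^ j * F j k) + (\<Sum>k\<in>{N - j..N}. x ^ (N - k) / x ^ j * F j k)"
      by (simp add: sum.union_disjoint)
    moreover have "x ^ (N - j) = x ^ N / x ^ j"
      using j x by (simp add: power_diff)
    ultimately show ?thesis
      by (simp add: sum_distrib_left field_simps) (simp add: add_divide_distrib sum_divide_distrib)
  qed
  have low: "(\<Sum>j\<in>{1..<N}. \<Sum>k\<in>{1..<N - j}. x ^ (N - k) / x ^ j * F j k)
      = (\<Sum>n\<in>{1..<N}. x ^ (N - n) * (\<Sum>j\<in>{1..<n}. F j (n - j)))"
    unfolding sum_triangle_reindex[of "\<lambda>j k. x ^ (N - k) / x ^ j * F j k"] sum_distrib_left
  proof (intro sum.cong refl)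
    fix n j assume "n \<in> {1..<N}" "j \<in> {1..<n}"
    then have "x ^ (N - (n - j)) = x ^ (N - n) * x ^ j"
      by (simp add: power_add[symmetric])
    then show "x ^ (N - (n - j)) / x ^ j * F j (n - j) = x ^ (N - n) * F j (n - j)"
      using x by simp
  qed
  have "(\<Sum>j\<in>{1..<N}. 1 / x ^ j * (x ^ N * T j + (\<Sum>k=1..N. x ^ (N - k) * F j k)))
      = (\<Sum>j\<in>{1..<N}. x ^ (N - j) * T j + (\<Sum>k\<in>{1..<N - j}. x ^ (N - k) / x ^ j * F j k)
          + (\<Sum>k\<in>{N - j..N}. x ^ (N - k) / x ^ j * F j k))"
    by (rule sum.cong[OF refl]) (rule split)
  then show ?thesis
    unfolding sum.distrib low .
qed

lemma energy_rate_rhs_expansion: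
  assumes x: "x > 0" and N: "N \<ge> 1"
  shows "energy_rate N A B x p q (rhs_pos N A B x p q) (rhs_neg N A B x p q)
           + (\<Sum>j\<in>{1..<N}. x ^ (N - j) * (lam_plus A B j * (cmod p)\<^sup>2 + lam_minus A B j * (cmod q)\<^sup>2))
         = self_coeff A B p q N
           + (\<Sum>j\<in>{1..<N}. \<Sum>k\<in>{N - j..N}. x ^ (N - k) / x ^ j * cross_coeff A B p q j k)"
proof -
  define S where "S = self_coeff A B p q"
  define T where "T j = 2 * Im (alpha A B j * (cnj p * cnj q))" for j
  define L where "L j = lam_plus A B j * (cmod p)\<^sup>2 + lam_minus A B j * (cmod q)\<^sup>2" for j
  define F where "F = cross_coeff A B p q"
  have cancel: "(\<Sum>n\<in>{1..<N}. x ^ (N - n) * S n) + (\<Sum>n\<in>{1..<N}. x ^ (N - n) * T n)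
      + (\<Sum>n\<in>{1..<N}. x ^ (N - n) * (\<Sum>j\<in>{1..<n}. F j (n - j))) + (\<Sum>n\<in>{1..<N}. x ^ (N - n) * L n) = 0"
    using lambda_cancellation[of A B p q]
    unfolding S_def T_def L_def F_def sum.distrib[symmetric] distrib_left[symmetric]
    by (intro sum.neutral ballI) (simp add: algebra_simps)
  have "{1..N} = insert N {1..<N}"
    using N by auto
  then have "(\<Sum>k=1..N. x ^ (N - k) * S k) = (\<Sum>k\<in>{1..<N}. x ^ (N - k) * S k) + S N"
    by simp
  with sum_divide_power_regroup[OF x, of N T F] cancel show ?thesis
    unfolding energy_rate_def Re_rhs_pos_mult_cnj Re_alpha_mult_rhs_cross
      S_def[symmetric] T_def[symmetric] L_def[symmetric] F_def[symmetric]
    by (simp add: sum.distrib algebra_simps)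
qed

lemma norm_cnj_mult_cnj_le: "cmod (cnj p * cnj q) \<le> (cmod p)\<^sup>2 + (cmod q)\<^sup>2"
proof -
  have "2 * (cmod p * cmod q) \<le> (cmod p)\<^sup>2 + (cmod q)\<^sup>2"
    using sum_squares_bound[of "cmod p" "cmod q"] by simp
  moreover have "0 \<le> cmod p * cmod q"
    by simp
  ultimately show ?thesis
    unfolding norm_mult complex_mod_cnj by linarith
qed

lemma abs_self_coeff_le:
  "\<bar>self_coeff A B p q k\<bar> \<le> 2 * (cmod (A k) + cmod (B k)) * ((cmod p)\<^sup>2 + (cmod q)\<^sup>2)"
proof -
  have "\<bar>Im (A k) * (cmod p)\<^sup>2\<bar> \<le> cmod (A k) * ((cmod p)\<^sup>2 + (cmod q)\<^sup>2)"
    using abs_Im_le_cmod[of "A k"] by (simp add: abs_mult mult_mono)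
  moreover have "\<bar>Im (B k * (cnj p * cnj q))\<bar> \<le> cmod (B k) * ((cmod p)\<^sup>2 + (cmod q)\<^sup>2)"
    using abs_Im_le_cmod[of "B k * (cnj p * cnj q)"] norm_cnj_mult_cnj_le[of p q]
    by (simp only: norm_mult) (meson mult_left_mono norm_ge_zero order_trans)
  ultimately show ?thesis
    unfolding self_coeff_def by (simp add: algebra_simps)
qed

lemma abs_cross_coeff_le:
  "\<bar>cross_coeff A B p q j k\<bar>
     \<le> 2 * cmod (alpha A B j) * (cmod (A k) + cmod (B k)) * ((cmod p)\<^sup>2 + (cmod q)\<^sup>2)"
proof -
  define a where "a = cmod (alpha A B j)"
  define S where "S = (cmod p)\<^sup>2 + (cmod q)\<^sup>2"
  have "\<bar>Im (alpha A B j * cnj (A k) * (cnj p * cnj q))\<bar> \<le> a * cmod (A k) * S"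
    using abs_Im_le_cmod[of "alpha A B j * cnj (A k) * (cnj p * cnj q)"] norm_cnj_mult_cnj_le[of p q]
    unfolding a_def S_def
    by (simp only: norm_mult complex_mod_cnj) (meson mult_left_mono norm_ge_zero order_trans zero_le_mult_iff)
  moreover have "\<bar>(1 + (-1) ^ k :: real)\<bar> \<le> 2"
    by (cases "even k") auto
  ultimately have A: "\<bar>(1 + (-1) ^ k) * Im (alpha A B j * cnj (A k) * (cnj p * cnj q))\<bar> \<le> 2 * (a * cmod (A k) * S)"
    unfolding abs_mult by (intro mult_mono) auto
  define I where "I = Im (alpha A B j * cnj (B k))"
  have "\<bar>I\<bar> \<le> a * cmod (B k)"
    using abs_Im_le_cmod[of "alpha A B j * cnj (B k)"] unfolding a_def I_def by (simp add: norm_mult)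
  moreover have "\<bar>(-1) ^ k * I * (cmod p)\<^sup>2 + I * (cmod q)\<^sup>2\<bar> \<le> \<bar>I\<bar> * S"
    unfolding S_def by (rule order_trans[OF abs_triangle_ineq]) (simp add: abs_mult distrib_left)
  ultimately have B: "\<bar>(-1) ^ k * I * (cmod p)\<^sup>2 + I * (cmod q)\<^sup>2\<bar> \<le> a * cmod (B k) * S"
    using mult_right_mono[of "\<bar>I\<bar>" "a * cmod (B k)" S] unfolding S_def by simp
  from A B have "\<bar>cross_coeff A B p q j k\<bar> \<le> 2 * (a * cmod (A k) * S) + a * cmod (B k) * S"
    unfolding cross_coeff_def I_def[symmetric] by (simp only: add.assoc)
  also have "\<dots> \<le> 2 * a * (cmod (A k) + cmod (B k)) * S"
    unfolding a_def S_def by (simp add: algebra_simps)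
  finally show ?thesis
    unfolding a_def S_def .
qed

text \<open>Up to adding \<open>1\<close>, this is the constant \<open>C\<close> of the theorem.\<close>

definition remainder_const :: "(nat \<Rightarrow> complex) \<Rightarrow> (nat \<Rightarrow> complex) \<Rightarrow> nat \<Rightarrow> real" where
  "remainder_const A B N = 2 * (cmod (A N) + cmod (B N))
     + (\<Sum>j\<in>{1..<N}. \<Sum>k=1..N. 2 * cmod (alpha A B j) * (cmod (A k) + cmod (B k)))"

lemma remainder_const_nonneg: "remainder_const A B N \<ge> 0"
  unfolding remainder_const_def by (intro add_nonneg_nonneg sum_nonneg) auto

lemma energy_rate_lambda_bound:
  assumes x: "x \<ge> 1" and N: "N \<ge> 1"
  shows "\<bar>energy_rate N A B x p q (rhs_pos N A B x p q) (rhs_neg N A B x p q)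
            + (\<Sum>j\<in>{1..<N}. x ^ (N - j) * (lam_plus A B j * (cmod p)\<^sup>2 + lam_minus A B j * (cmod q)\<^sup>2))\<bar>
         \<le> remainder_const A B N * ((cmod p)\<^sup>2 + (cmod q)\<^sup>2)"
proof -
  define S where "S = (cmod p)\<^sup>2 + (cmod q)\<^sup>2"
  define F where "F = cross_coeff A B p q"
  define c where "c j k = 2 * cmod (alpha A B j) * (cmod (A k) + cmod (B k)) * S" for j k
  have "\<bar>x ^ (N - k) / x ^ j * F j k\<bar> \<le> c j k" if "j \<in> {1..<N}" "k \<in> {N - j..N}" for j k
  proof -
    have "x ^ (N - k) \<le> x ^ j"
      using x that by (intro power_increasing) auto
    then have "\<bar>x ^ (N - k) / x ^ j\<bar> \<le> 1"
      using x by simp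
    then have "\<bar>x ^ (N - k) / x ^ j * F j k\<bar> \<le> \<bar>F j k\<bar>"
      using mult_right_mono[of "\<bar>x ^ (N - k) / x ^ j\<bar>" 1 "\<bar>F j k\<bar>"] by (simp only: abs_mult) simp
    then show ?thesis
      unfolding c_def F_def S_def by (rule order_trans) (rule abs_cross_coeff_le)
  qed
  then have "\<bar>\<Sum>j\<in>{1..<N}. \<Sum>k\<in>{N - j..N}. x ^ (N - k) / x ^ j * F j k\<bar> \<le> (\<Sum>j\<in>{1..<N}. \<Sum>k\<in>{N - j..N}. c j k)"
    by (intro order_trans[OF sum_abs] sum_mono order_trans[OF sum_abs]) auto
  also have "\<dots> \<le> (\<Sum>j\<in>{1..<N}. \<Sum>k=1..N. c j k)"
    unfolding c_def S_def by (intro sum_mono sum_mono2) auto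
  finally have "\<bar>self_coeff A B p q N + (\<Sum>j\<in>{1..<N}. \<Sum>k\<in>{N - j..N}. x ^ (N - k) / x ^ j * F j k)\<bar>
      \<le> 2 * (cmod (A N) + cmod (B N)) * S + (\<Sum>j\<in>{1..<N}. \<Sum>k=1..N. c j k)"
    using abs_self_coeff_le[of A B p q N] unfolding S_def by linarith
  also have "\<dots> = remainder_const A B N * S"
    unfolding remainder_const_def c_def by (simp add: sum_distrib_right distrib_right)
  finally have "\<bar>self_coeff A B p q N + (\<Sum>j\<in>{1..<N}. \<Sum>k\<in>{N - j..N}. x ^ (N - k) / x ^ j * F j k)\<bar>
      \<le> remainder_const A B N * S" .
  moreover have "x > 0"
    using x by simp
  ultimately show ?thesis
    unfolding S_def F_def by (simp only: energy_rate_rhs_expansion[OF _ N])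
qed

lemma norm_mult_add_mult_le:
  fixes a b c d :: "'a::real_normed_field"
  shows "norm (a * b + c * d) \<le> (norm a + norm c) * (norm b + norm d)"
proof -
  have "norm (a * b + c * d) \<le> norm a * norm b + norm c * norm d"
    using norm_triangle_ineq[of "a * b" "c * d"] by (simp add: norm_mult)
  also have "\<dots> \<le> (norm a + norm c) * (norm b + norm d)"
    by (simp add: algebra_simps)
  finally show ?thesis .
qed

definition rhs_const :: "nat \<Rightarrow> (nat \<Rightarrow> complex) \<Rightarrow> (nat \<Rightarrow> complex) \<Rightarrow> real" where
  "rhs_const N A B = 1 + (\<Sum>k=1..N. cmod (A k) + cmod (B k))"

lemma rhs_const_ge_1: "rhs_const N A B \<ge> 1"
  unfolding rhs_const_def by (simp add: sum_nonneg)

lemma norm_rhs_pos_le: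
  assumes x: "x \<ge> 1"
  shows "cmod (rhs_pos N A B x p q) \<le> rhs_const N A B * x ^ N * (cmod p + cmod q)"
proof -
  define S where "S = cmod p + cmod q"
  have "cmod (of_real (x ^ (N - k)) * (A k * p + B k * cnj q)) \<le> x ^ N * ((cmod (A k) + cmod (B k)) * S)"
    for k
  proof -
    have "x ^ (N - k) \<le> x ^ N"
      using x by (intro power_increasing) auto
    moreover have "cmod (A k * p + B k * cnj q) \<le> (cmod (A k) + cmod (B k)) * S"
      using norm_mult_add_mult_le[of "A k" p "B k" "cnj q"] unfolding S_def by simp
    ultimately show ?thesis
      using x by (simp add: norm_mult mult_mono del: of_real_power)
  qed
  then have "cmod (\<Sum>k=1..N. of_real (x ^ (N - k)) * (A k * p + B k * cnj q))
      \<le> (\<Sum>k=1..N. x ^ N * ((cmod (A k) + cmod (B k)) * S))"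
    by (rule order_trans[OF norm_sum sum_mono])
  moreover have "cmod (of_real (x ^ N) * p) \<le> x ^ N * S"
    using x unfolding S_def by (simp add: norm_mult mult_left_mono del: of_real_power)
  ultimately have "cmod (of_real (x ^ N) * p + (\<Sum>k=1..N. of_real (x ^ (N - k)) * (A k * p + B k * cnj q)))
      \<le> x ^ N * S + (\<Sum>k=1..N. x ^ N * ((cmod (A k) + cmod (B k)) * S))"
    by (rule order_trans[OF norm_triangle_ineq add_mono[rotated]])
  then have "cmod (rhs_pos N A B x p q)
      \<le> x ^ N * S + (\<Sum>k=1..N. x ^ N * ((cmod (A k) + cmod (B k)) * S))"
    unfolding rhs_pos_def norm_mult by simp
  then show ?thesis
    unfolding rhs_const_def S_def by (simp add: algebra_simps sum_distrib_left sum_distrib_right)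
qed

definition alt_sign :: "(nat \<Rightarrow> complex) \<Rightarrow> nat \<Rightarrow> complex" where
  "alt_sign A = (\<lambda>k. (-1) ^ k * A k)"

lemma norm_alt_sign [simp]: "cmod (alt_sign A k) = cmod (A k)"
  by (simp add: alt_sign_def norm_mult norm_power)

lemma rhs_neg_eq_rhs_pos_alt_sign: "rhs_neg N A B x p q = rhs_pos N (alt_sign A) (alt_sign B) x q p"
  unfolding rhs_neg_def rhs_pos_def alt_sign_def by (simp add: algebra_simps)

lemma norm_rhs_neg_le:
  assumes "x \<ge> 1"
  shows "cmod (rhs_neg N A B x p q) \<le> rhs_const N A B * x ^ N * (cmod p + cmod q)"
  using norm_rhs_pos_le[OF assms, of N "alt_sign A" "alt_sign B" q p]
  unfolding rhs_neg_eq_rhs_pos_alt_sign rhs_const_def by (simp add: add.commute)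

lemma abs_energy_rate_le:
  assumes x: "x \<ge> 1"
  shows "\<bar>energy_rate N A B x p q p' q'\<bar>
           \<le> (2 + (\<Sum>j\<in>{1..<N}. cmod (alpha A B j))) * (cmod p' + cmod q') * (cmod p + cmod q)"
proof -
  define R where "R = (cmod p' + cmod q') * (cmod p + cmod q)"
  have "\<bar>Re (p' * cnj p + p * cnj p')\<bar> \<le> 2 * (cmod p' * cmod p)"
    using abs_Re_le_cmod[of "p' * cnj p + p * cnj p'"] norm_triangle_ineq[of "p' * cnj p" "p * cnj p'"]
    by (simp add: norm_mult mult.commute)
  also have "\<dots> \<le> 2 * R"
    unfolding R_def by (intro mult_left_mono mult_mono) auto
  finally have self: "\<bar>Re (p' * cnj p + p * cnj p')\<bar> \<le> 2 * R" .
  have "\<bar>Re (alpha A B j * (of_real (1 / x ^ j) * (cnj q' * cnj p + cnj q * cnj p')))\<bar>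
      \<le> cmod (alpha A B j) * R" for j
  proof -
    have "1 / x ^ j \<le> 1"
      using x by simp
    moreover have "cmod (cnj q' * cnj p + cnj p' * cnj q) \<le> R"
      using norm_mult_add_mult_le[of "cnj q'" "cnj p" "cnj p'" "cnj q"] unfolding R_def by (simp add: add.commute)
    ultimately have "(1 / x ^ j) * cmod (cnj q' * cnj p + cnj q * cnj p') \<le> 1 * R"
      using x by (intro mult_mono) (auto simp: mult.commute)
    moreover have "cmod (of_real (1 / x ^ j) * z) = 1 / x ^ j * cmod z" for z
      using x by (simp only: norm_mult norm_of_real) simp
    ultimately have "cmod (of_real (1 / x ^ j) * (cnj q' * cnj p + cnj q * cnj p')) \<le> R"
      by simp
    then show ?thesis
      using abs_Re_le_cmod order_trans norm_mult mult_left_mono norm_ge_zero by metis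
  qed
  then have "\<bar>\<Sum>j\<in>{1..<N}. Re (alpha A B j * (of_real (1 / x ^ j) * (cnj q' * cnj p + cnj q * cnj p')))\<bar>
      \<le> (\<Sum>j\<in>{1..<N}. cmod (alpha A B j) * R)"
    by (rule order_trans[OF sum_abs sum_mono])
  with self have "\<bar>energy_rate N A B x p q p' q'\<bar> \<le> 2 * R + (\<Sum>j\<in>{1..<N}. cmod (alpha A B j) * R)"
    unfolding energy_rate_def by (rule order_trans[OF abs_triangle_ineq add_mono])
  also have "\<dots> = (2 + (\<Sum>j\<in>{1..<N}. cmod (alpha A B j))) * R"
    by (simp add: sum_distrib_right distrib_right)
  finally show ?thesis
    unfolding R_def by (simp only: mult.assoc)
qed

definition rate_const :: "nat \<Rightarrow> (nat \<Rightarrow> complex) \<Rightarrow> (nat \<Rightarrow> complex) \<Rightarrow> real" where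
  "rate_const N A B = 4 * rhs_const N A B * (2 + (\<Sum>j\<in>{1..<N}. cmod (alpha A B j)))"

lemma rate_const_nonneg: "rate_const N A B \<ge> 0"
  unfolding rate_const_def using rhs_const_ge_1[of N A B] by (simp add: sum_nonneg)

lemma abs_energy_rate_rhs_le:
  assumes x: "x \<ge> 1"
  shows "\<bar>energy_rate N A B x p q (rhs_pos N A B x p q) (rhs_neg N A B x p q)\<bar>
           \<le> rate_const N A B * x ^ N * ((cmod p)\<^sup>2 + (cmod q)\<^sup>2)"
proof -
  define a where "a = 2 + (\<Sum>j\<in>{1..<N}. cmod (alpha A B j))"
  define c where "c = rhs_const N A B"
  define S where "S = cmod p + cmod q"
  have a: "a \<ge> 0"
    unfolding a_def by (simp add: sum_nonneg)
  have c: "c \<ge> 1"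
    unfolding c_def by (rule rhs_const_ge_1)
  have rhs: "cmod (rhs_pos N A B x p q) + cmod (rhs_neg N A B x p q) \<le> 2 * c * x ^ N * S"
    using add_mono[OF norm_rhs_pos_le[OF x, of N A B p q] norm_rhs_neg_le[OF x, of N A B p q]]
    unfolding c_def S_def by (simp add: mult_ac)
  have SS: "S * S \<le> 2 * ((cmod p)\<^sup>2 + (cmod q)\<^sup>2)"
    using sum_squares_bound[of "cmod p" "cmod q"] unfolding S_def by (simp add: power2_eq_square algebra_simps)
  have "\<bar>energy_rate N A B x p q (rhs_pos N A B x p q) (rhs_neg N A B x p q)\<bar>
      \<le> a * (cmod (rhs_pos N A B x p q) + cmod (rhs_neg N A B x p q)) * S"
    unfolding a_def S_def by (rule abs_energy_rate_le[OF x])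
  also have "\<dots> \<le> a * (2 * c * x ^ N * S) * S"
    using rhs a unfolding S_def by (intro mult_right_mono mult_left_mono) auto
  also have "\<dots> = 2 * a * c * x ^ N * (S * S)"
    by (simp add: algebra_simps)
  also have "\<dots> \<le> 2 * a * c * x ^ N * (2 * ((cmod p)\<^sup>2 + (cmod q)\<^sup>2))"
    using SS a c x by (intro mult_left_mono) auto
  also have "\<dots> = rate_const N A B * x ^ N * ((cmod p)\<^sup>2 + (cmod q)\<^sup>2)"
    unfolding rate_const_def a_def c_def by (simp add: algebra_simps)
  finally show ?thesis .
qed

section \<open>Differentiation under the integral sign\<close>

lemma abs_difference_quotient_le:
  fixes f f' :: "real \<Rightarrow> real"
  assumes der: "\<And>z. z \<in> ball t d \<Longrightarrow> (f has_real_derivative f' z) (at z)"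
    and bound: "\<And>z. z \<in> ball t d \<Longrightarrow> \<bar>f' z\<bar> \<le> B"
    and s: "s \<in> ball t d" "s \<noteq> t"
  shows "\<bar>(f s - f t) / (s - t)\<bar> \<le> B"
proof -
  have t: "t \<in> ball t d"
    using s(1) zero_le_dist[of t s] unfolding mem_ball dist_self by linarith
  have "norm (f s - f t) \<le> B * norm (s - t)"
  proof (rule field_differentiable_bound[where S = "ball t d"])
    show "(f has_field_derivative f' z) (at z within ball t d)" if "z \<in> ball t d" for z
      using that by (intro has_field_derivative_at_within[OF der])
    show "norm (f' z) \<le> B" if "z \<in> ball t d" for z
      using that bound by simp
  qed (use s t in auto)
  then show ?thesis
    using s by (simp add: abs_divide divide_le_eq)
qed

lemma has_real_derivative_integral:
  fixes h h' :: "real \<Rightarrow> 'a \<Rightarrow> real"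
  assumes J: "open J" "t \<in> J"
    and int: "\<And>s. s \<in> J \<Longrightarrow> integrable M (h s)"
    and der: "\<And>s \<xi>. s \<in> J \<Longrightarrow> \<xi> \<in> space M \<Longrightarrow> ((\<lambda>\<tau>. h \<tau> \<xi>) has_real_derivative h' s \<xi>) (at s)"
    and dom: "\<And>s \<xi>. s \<in> J \<Longrightarrow> \<xi> \<in> space M \<Longrightarrow> \<bar>h' s \<xi>\<bar> \<le> G \<xi>"
    and G: "integrable M G"
    and meas: "h' t \<in> borel_measurable M"
  shows "((\<lambda>s. \<integral>\<xi>. h s \<xi> \<partial>M) has_real_derivative (\<integral>\<xi>. h' t \<xi> \<partial>M)) (at t)"
proof -
  obtain d where d: "d > 0" "ball t d \<subseteq> J"
    using J open_contains_ball by blast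
  define quot where "quot s \<xi> = (h s \<xi> - h t \<xi>) / (s - t)" for s \<xi>
  have quot_le: "\<bar>quot s \<xi>\<bar> \<le> G \<xi>" if "s \<in> ball t d" "s \<noteq> t" "\<xi> \<in> space M" for s \<xi>
    unfolding quot_def
    by (rule abs_difference_quotient_le[where f' = "\<lambda>z. h' z \<xi>"]) (use that d in \<open>auto intro: der dom\<close>)
  have "((\<lambda>s. ((\<integral>\<xi>. h s \<xi> \<partial>M) - (\<integral>\<xi>. h t \<xi> \<partial>M)) / (s - t)) \<longlongrightarrow> (\<integral>\<xi>. h' t \<xi> \<partial>M)) (at t)"
    unfolding tendsto_at_iff_sequentially comp_def
  proof (intro allI impI)
    fix X :: "nat \<Rightarrow> real"
    assume X: "\<forall>i. X i \<in> UNIV - {t}" and X_lim: "X \<longlonglongrightarrow> t"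
    obtain i0 where i0: "\<And>i. i \<ge> i0 \<Longrightarrow> dist (X i) t < d"
      using X_lim d(1) unfolding lim_sequentially by blast
    have Xi: "X (i + i0) \<in> J" "X (i + i0) \<noteq> t" "X (i + i0) \<in> ball t d" for i
      using i0[of "i + i0"] d X by (auto simp: dist_commute)
    have "(\<lambda>i. \<integral>\<xi>. quot (X (i + i0)) \<xi> \<partial>M) \<longlonglongrightarrow> (\<integral>\<xi>. h' t \<xi> \<partial>M)"
    proof (rule integral_dominated_convergence[where w = G])
      show "(\<lambda>\<xi>. quot (X (i + i0)) \<xi>) \<in> borel_measurable M" for i
        using int[OF Xi(1)] int[OF J(2)] unfolding quot_def by measurable
      show "AE \<xi> in M. (\<lambda>i. quot (X (i + i0)) \<xi>) \<longlonglongrightarrow> h' t \<xi>"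
      proof (rule AE_I2)
        fix \<xi> assume "\<xi> \<in> space M"
        then have "((\<lambda>\<tau>. (h \<tau> \<xi> - h t \<xi>) / (\<tau> - t)) \<longlongrightarrow> h' t \<xi>) (at t)"
          using der[OF J(2)] by (simp add: has_field_derivative_iff)
        then have "(\<lambda>i. quot (X i) \<xi>) \<longlonglongrightarrow> h' t \<xi>"
          unfolding tendsto_at_iff_sequentially comp_def quot_def using X X_lim by blast
        then show "(\<lambda>i. quot (X (i + i0)) \<xi>) \<longlonglongrightarrow> h' t \<xi>"
          by (rule LIMSEQ_ignore_initial_segment)
      qed
      show "AE \<xi> in M. norm (quot (X (i + i0)) \<xi>) \<le> G \<xi>" for i
        using quot_le[OF Xi(3,2)] by (intro AE_I2) simp
    qed (use G meas in auto)
    moreover have "(\<integral>\<xi>. quot (X (i + i0)) \<xi> \<partial>M)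
        = ((\<integral>\<xi>. h (X (i + i0)) \<xi> \<partial>M) - (\<integral>\<xi>. h t \<xi> \<partial>M)) / (X (i + i0) - t)" for i
      using int[OF Xi(1)] int[OF J(2)] unfolding quot_def by simp
    ultimately have "(\<lambda>i. ((\<integral>\<xi>. h (X (i + i0)) \<xi> \<partial>M) - (\<integral>\<xi>. h t \<xi> \<partial>M)) / (X (i + i0) - t))
        \<longlonglongrightarrow> (\<integral>\<xi>. h' t \<xi> \<partial>M)"
      by simp
    then show "(\<lambda>i. ((\<integral>\<xi>. h (X i) \<xi> \<partial>M) - (\<integral>\<xi>. h t \<xi> \<partial>M)) / (X i - t))
        \<longlonglongrightarrow> (\<integral>\<xi>. h' t \<xi> \<partial>M)"
      by (rule LIMSEQ_offset)
  qed
  then show ?thesis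
    unfolding has_field_derivative_iff .
qed

section \<open>The energy estimate on the half line\<close>

lemma borel_measurable_cnj [measurable]: "(cnj :: complex \<Rightarrow> complex) \<in> borel_measurable borel"
  by (intro borel_measurable_continuous_onI continuous_intros)

lemma integrable_half_line:
  fixes f :: "real \<Rightarrow> 'b::{banach, second_countable_topology}"
  assumes D: "integrable M D" and [measurable]: "f \<in> borel_measurable M" "(\<lambda>\<xi>. \<xi>) \<in> borel_measurable M"
    and le: "\<And>\<xi>. \<xi> \<in> space M \<Longrightarrow> 1 \<le> \<xi> \<Longrightarrow> norm (f \<xi>) \<le> D \<xi>"
  shows "integrable M (\<lambda>\<xi>. if 1 \<le> \<xi> then f \<xi> else 0)"
proof (rule Bochner_Integration.integrable_bound[OF D])
  show "AE \<xi> in M. norm (if 1 \<le> \<xi> then f \<xi> else 0) \<le> norm (D \<xi>)"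
    using le by (intro AE_I2) (auto intro: order_trans[OF _ abs_ge_self])
qed measurable

lemma le_weighted_sum_squares:
  fixes \<xi> :: real
  assumes "1 \<le> \<xi>" "k \<le> N"
  shows "\<xi> ^ k * (cmod p)\<^sup>2 \<le> \<xi> ^ N * ((cmod p)\<^sup>2 + (cmod q)\<^sup>2)"
    and "\<xi> ^ k * (cmod q)\<^sup>2 \<le> \<xi> ^ N * ((cmod p)\<^sup>2 + (cmod q)\<^sup>2)"
  using assms by (intro mult_mono power_increasing; simp)+

text \<open>\<open>P s \<xi>\<close> and \<open>Q s \<xi>\<close> play the roles of \<open>v s \<xi>\<close> and \<open>v s (- \<xi>)\<close>;
  \<open>D\<close> is the integrable majorant needed for dominated convergence.\<close>

context
  fixes M :: "real measure" and N :: nat and A B :: "nat \<Rightarrow> complex" and J :: "real set"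
    and P Q :: "real \<Rightarrow> real \<Rightarrow> complex" and D :: "real \<Rightarrow> real"
  assumes id_measurable [measurable]: "(\<lambda>\<xi>. \<xi>) \<in> borel_measurable M"
    and open_J: "open J"
    and P_measurable: "\<And>s. s \<in> J \<Longrightarrow> P s \<in> borel_measurable M"
    and Q_measurable: "\<And>s. s \<in> J \<Longrightarrow> Q s \<in> borel_measurable M"
    and integrable_D: "integrable M D"
    and dominated: "\<And>s \<xi>. s \<in> J \<Longrightarrow> \<xi> \<in> space M \<Longrightarrow> 1 \<le> \<xi> \<Longrightarrow>
        \<xi> ^ N * ((cmod (P s \<xi>))\<^sup>2 + (cmod (Q s \<xi>))\<^sup>2) \<le> D \<xi>"
    and P_solves: "\<And>s \<xi>. s \<in> J \<Longrightarrow> \<xi> \<in> space M \<Longrightarrow> 1 \<le> \<xi> \<Longrightarrow>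
        ((\<lambda>\<tau>. P \<tau> \<xi>) has_vector_derivative rhs_pos N A B \<xi> (P s \<xi>) (Q s \<xi>)) (at s)"
    and Q_solves: "\<And>s \<xi>. s \<in> J \<Longrightarrow> \<xi> \<in> space M \<Longrightarrow> 1 \<le> \<xi> \<Longrightarrow>
        ((\<lambda>\<tau>. Q \<tau> \<xi>) has_vector_derivative rhs_neg N A B \<xi> (P s \<xi>) (Q s \<xi>)) (at s)"
begin

lemma integrable_half_line_dominated:
  fixes f :: "real \<Rightarrow> 'b::{banach, second_countable_topology}"
  assumes s: "s \<in> J" and "f \<in> borel_measurable M"
    and le: "\<And>\<xi>. \<xi> \<in> space M \<Longrightarrow> 1 \<le> \<xi> \<Longrightarrow> norm (f \<xi>) \<le> C * (\<xi> ^ N * ((cmod (P s \<xi>))\<^sup>2 + (cmod (Q s \<xi>))\<^sup>2))"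
  shows "integrable M (\<lambda>\<xi>. if 1 \<le> \<xi> then f \<xi> else 0)"
proof (rule integrable_half_line[where D = "\<lambda>\<xi>. \<bar>C\<bar> * D \<xi>"])
  fix \<xi> assume \<xi>: "\<xi> \<in> space M" "1 \<le> \<xi>"
  have "C * (\<xi> ^ N * ((cmod (P s \<xi>))\<^sup>2 + (cmod (Q s \<xi>))\<^sup>2)) \<le> \<bar>C\<bar> * D \<xi>"
    using dominated[OF s \<xi>] \<xi> by (intro order_trans[OF mult_right_mono[OF abs_ge_self] mult_left_mono]) auto
  then show "norm (f \<xi>) \<le> \<bar>C\<bar> * D \<xi>"
    using le[OF \<xi>] by linarith
qed (use integrable_D assms(2) in auto)

lemma integrable_half_line_norm_squares:
  assumes s: "s \<in> J" and "k \<le> N"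
  shows "integrable M (\<lambda>\<xi>. if 1 \<le> \<xi> then \<xi> ^ k * (cmod (P s \<xi>))\<^sup>2 else 0)"
    and "integrable M (\<lambda>\<xi>. if 1 \<le> \<xi> then \<xi> ^ k * (cmod (Q s \<xi>))\<^sup>2 else 0)"
  using P_measurable[OF s] Q_measurable[OF s] le_weighted_sum_squares[OF _ \<open>k \<le> N\<close>]
  by (intro integrable_half_line_dominated[OF s, where C = 1]; simp)+

lemma integrable_half_line_cross:
  assumes s: "s \<in> J"
  shows "integrable M (\<lambda>\<xi>. if 1 \<le> \<xi> then of_real (1 / \<xi> ^ j) * cnj (Q s \<xi>) * cnj (P s \<xi>) else 0)"
proof (rule integrable_half_line_dominated[OF s, where C = 1])
  show "(\<lambda>\<xi>. of_real (1 / \<xi> ^ j) * cnj (Q s \<xi>) * cnj (P s \<xi>)) \<in> borel_measurable M"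
    using P_measurable[OF s] Q_measurable[OF s] by measurable
  fix \<xi> :: real assume "1 \<le> \<xi>"
  then have "norm (of_real (1 / \<xi> ^ j) * cnj (Q s \<xi>) * cnj (P s \<xi>)) = 1 / \<xi> ^ j * cmod (cnj (Q s \<xi>) * cnj (P s \<xi>))"
    by (simp only: mult.assoc norm_mult[of "of_real _"] norm_of_real) simp
  also have "\<dots> \<le> cmod (cnj (Q s \<xi>) * cnj (P s \<xi>))"
    using \<open>1 \<le> \<xi>\<close> by (intro mult_left_le_one_le) auto
  also have "\<dots> \<le> (cmod (P s \<xi>))\<^sup>2 + (cmod (Q s \<xi>))\<^sup>2"
    using norm_cnj_mult_cnj_le[of "Q s \<xi>" "P s \<xi>"] by (simp add: add.commute)
  also have "\<dots> \<le> 1 * (\<xi> ^ N * ((cmod (P s \<xi>))\<^sup>2 + (cmod (Q s \<xi>))\<^sup>2))"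
    using mult_right_mono[OF one_le_power[OF \<open>1 \<le> \<xi>\<close>, of N], of "(cmod (P s \<xi>))\<^sup>2 + (cmod (Q s \<xi>))\<^sup>2"]
    by simp
  finally show "norm (of_real (1 / \<xi> ^ j) * cnj (Q s \<xi>) * cnj (P s \<xi>))
      \<le> 1 * (\<xi> ^ N * ((cmod (P s \<xi>))\<^sup>2 + (cmod (Q s \<xi>))\<^sup>2))" .
qed

lemma half_line_energy_density_eq:
  "(if 1 \<le> \<xi> then energy_density N A B \<xi> (P s \<xi>) (Q s \<xi>) else 0)
     = (if 1 \<le> \<xi> then (cmod (P s \<xi>))\<^sup>2 else 0)
       + (\<Sum>j\<in>{1..<N}. Re (alpha A B j *
            (if 1 \<le> \<xi> then of_real (1 / \<xi> ^ j) * cnj (Q s \<xi>) * cnj (P s \<xi>) else 0)))"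
proof (cases "1 \<le> \<xi>")
  case True
  then show ?thesis
    by (simp only: True if_True energy_density_def)
qed simp

lemma integral_half_line_energy_density:
  assumes s: "s \<in> J"
  shows "integrable M (\<lambda>\<xi>. if 1 \<le> \<xi> then energy_density N A B \<xi> (P s \<xi>) (Q s \<xi>) else 0)"
    and "(\<integral>\<xi>. (if 1 \<le> \<xi> then energy_density N A B \<xi> (P s \<xi>) (Q s \<xi>) else 0) \<partial>M)
       = (\<integral>\<xi>. (if 1 \<le> \<xi> then (cmod (P s \<xi>))\<^sup>2 else 0) \<partial>M)
         + (\<Sum>j\<in>{1..<N}. Re (alpha A B j *
              (\<integral>\<xi>. (if 1 \<le> \<xi> then of_real (1 / \<xi> ^ j) * cnj (Q s \<xi>) * cnj (P s \<xi>) else 0) \<partial>M)))"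
proof -
  define cross where "cross j \<xi> = (if 1 \<le> \<xi> then of_real (1 / \<xi> ^ j) * cnj (Q s \<xi>) * cnj (P s \<xi>) else 0)" for j \<xi>
  have sq: "integrable M (\<lambda>\<xi>. if 1 \<le> \<xi> then (cmod (P s \<xi>))\<^sup>2 else 0)"
    using integrable_half_line_norm_squares(1)[OF s le0] unfolding power_0 mult_1 .
  have cross: "integrable M (\<lambda>\<xi>. Re (alpha A B j * cross j \<xi>))" for j
    unfolding cross_def using integrable_half_line_cross[OF s] by (intro integrable_Re integrable_mult_right)
  have "(\<integral>\<xi>. Re (alpha A B j * cross j \<xi>) \<partial>M) = Re (alpha A B j * (\<integral>\<xi>. cross j \<xi> \<partial>M))" for j
    using integrable_half_line_cross[OF s] unfolding cross_def by (subst integral_Re) auto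
  with sq cross show "integrable M (\<lambda>\<xi>. if 1 \<le> \<xi> then energy_density N A B \<xi> (P s \<xi>) (Q s \<xi>) else 0)"
    and "(\<integral>\<xi>. (if 1 \<le> \<xi> then energy_density N A B \<xi> (P s \<xi>) (Q s \<xi>) else 0) \<partial>M)
       = (\<integral>\<xi>. (if 1 \<le> \<xi> then (cmod (P s \<xi>))\<^sup>2 else 0) \<partial>M)
         + (\<Sum>j\<in>{1..<N}. Re (alpha A B j *
              (\<integral>\<xi>. (if 1 \<le> \<xi> then of_real (1 / \<xi> ^ j) * cnj (Q s \<xi>) * cnj (P s \<xi>) else 0) \<partial>M)))"
    unfolding half_line_energy_density_eq cross_def[symmetric] by simp_all
qed

lemma has_real_derivative_half_line_energy:
  assumes t: "t \<in> J"
  shows "((\<lambda>s. \<integral>\<xi>. (if 1 \<le> \<xi> then energy_density N A B \<xi> (P s \<xi>) (Q s \<xi>) else 0) \<partial>M)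
          has_real_derivative
          (\<integral>\<xi>. (if 1 \<le> \<xi> then energy_rate N A B \<xi> (P t \<xi>) (Q t \<xi>)
                  (rhs_pos N A B \<xi> (P t \<xi>) (Q t \<xi>)) (rhs_neg N A B \<xi> (P t \<xi>) (Q t \<xi>)) else 0) \<partial>M)) (at t)"
proof -
  define density where "density s \<xi> = (if 1 \<le> \<xi> then energy_density N A B \<xi> (P s \<xi>) (Q s \<xi>) else 0)" for s \<xi>
  define rate where "rate s \<xi> = (if 1 \<le> \<xi> then energy_rate N A B \<xi> (P s \<xi>) (Q s \<xi>)
      (rhs_pos N A B \<xi> (P s \<xi>) (Q s \<xi>)) (rhs_neg N A B \<xi> (P s \<xi>) (Q s \<xi>)) else 0)" for s \<xi>
  have "((\<lambda>s. \<integral>\<xi>. density s \<xi> \<partial>M) has_real_derivative (\<integral>\<xi>. rate t \<xi> \<partial>M)) (at t)"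
  proof (rule has_real_derivative_integral[OF open_J t, where h = density and h' = rate and G = "\<lambda>\<xi>. rate_const N A B * \<bar>D \<xi>\<bar>"])
    fix s \<xi> assume s: "s \<in> J" and \<xi>: "\<xi> \<in> space M"
    show "((\<lambda>\<tau>. density \<tau> \<xi>) has_real_derivative rate s \<xi>) (at s)"
      using has_real_derivative_energy_density[OF P_solves[OF s \<xi>] Q_solves[OF s \<xi>]]
      unfolding density_def rate_def by auto
    show "\<bar>rate s \<xi>\<bar> \<le> rate_const N A B * \<bar>D \<xi>\<bar>"
    proof (cases "1 \<le> \<xi>")
      case True
      have "rate_const N A B * (\<xi> ^ N * ((cmod (P s \<xi>))\<^sup>2 + (cmod (Q s \<xi>))\<^sup>2)) \<le> rate_const N A B * \<bar>D \<xi>\<bar>"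
        using dominated[OF s \<xi> True] rate_const_nonneg by (intro mult_left_mono) auto
      then show ?thesis
        using abs_energy_rate_rhs_le[OF True, of N A B "P s \<xi>" "Q s \<xi>"] True
        unfolding rate_def by (simp add: mult.assoc)
    qed (simp add: rate_def rate_const_nonneg)
  next
    show "integrable M (\<lambda>\<xi>. rate_const N A B * \<bar>D \<xi>\<bar>)"
      using integrable_D by simp
    show "rate t \<in> borel_measurable M"
      using P_measurable[OF t] Q_measurable[OF t]
      unfolding rate_def energy_rate_def rhs_pos_def rhs_neg_def by measurable
  qed (unfold density_def, rule integral_half_line_energy_density(1))
  then show ?thesis
    unfolding density_def rate_def .
qed

lemma integrable_half_line_energy_rate:
  assumes t: "t \<in> J"
  shows "integrable M (\<lambda>\<xi>. if 1 \<le> \<xi> then energy_rate N A B \<xi> (P t \<xi>) (Q t \<xi>)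
           (rhs_pos N A B \<xi> (P t \<xi>) (Q t \<xi>)) (rhs_neg N A B \<xi> (P t \<xi>) (Q t \<xi>)) else 0)"
proof (rule integrable_half_line_dominated[OF t, where C = "rate_const N A B"])
  show "(\<lambda>\<xi>. energy_rate N A B \<xi> (P t \<xi>) (Q t \<xi>)
      (rhs_pos N A B \<xi> (P t \<xi>) (Q t \<xi>)) (rhs_neg N A B \<xi> (P t \<xi>) (Q t \<xi>))) \<in> borel_measurable M"
    using P_measurable[OF t] Q_measurable[OF t] unfolding energy_rate_def rhs_pos_def rhs_neg_def by measurable
  show "norm (energy_rate N A B \<xi> (P t \<xi>) (Q t \<xi>) (rhs_pos N A B \<xi> (P t \<xi>) (Q t \<xi>))
      (rhs_neg N A B \<xi> (P t \<xi>) (Q t \<xi>)))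
      \<le> rate_const N A B * (\<xi> ^ N * ((cmod (P t \<xi>))\<^sup>2 + (cmod (Q t \<xi>))\<^sup>2))" if "1 \<le> \<xi>" for \<xi>
    using abs_energy_rate_rhs_le[OF that, of N A B "P t \<xi>" "Q t \<xi>"] by (simp add: mult.assoc)
qed

lemma abs_integral_half_line_energy_rate_le:
  assumes N: "N \<ge> 1" and t: "t \<in> J"
  shows "\<bar>(\<integral>\<xi>. (if 1 \<le> \<xi> then energy_rate N A B \<xi> (P t \<xi>) (Q t \<xi>)
             (rhs_pos N A B \<xi> (P t \<xi>) (Q t \<xi>)) (rhs_neg N A B \<xi> (P t \<xi>) (Q t \<xi>)) else 0) \<partial>M)
           + (\<Sum>j\<in>{1..<N}.
              lam_plus A B j * (\<integral>\<xi>. (if 1 \<le> \<xi> then \<xi> ^ (N - j) * (cmod (P t \<xi>))\<^sup>2 else 0) \<partial>M)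
              + lam_minus A B j * (\<integral>\<xi>. (if 1 \<le> \<xi> then \<xi> ^ (N - j) * (cmod (Q t \<xi>))\<^sup>2 else 0) \<partial>M))\<bar>
         \<le> remainder_const A B N * ((\<integral>\<xi>. (if 1 \<le> \<xi> then (cmod (P t \<xi>))\<^sup>2 else 0) \<partial>M)
                                    + (\<integral>\<xi>. (if 1 \<le> \<xi> then (cmod (Q t \<xi>))\<^sup>2 else 0) \<partial>M))"
proof -
  define rate where "rate \<xi> = (if 1 \<le> \<xi> then energy_rate N A B \<xi> (P t \<xi>) (Q t \<xi>)
      (rhs_pos N A B \<xi> (P t \<xi>) (Q t \<xi>)) (rhs_neg N A B \<xi> (P t \<xi>) (Q t \<xi>)) else 0)" for \<xi>
  define sqP where "sqP k \<xi> = (if 1 \<le> \<xi> then \<xi> ^ k * (cmod (P t \<xi>))\<^sup>2 else 0)" for k \<xi>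
  define sqQ where "sqQ k \<xi> = (if 1 \<le> \<xi> then \<xi> ^ k * (cmod (Q t \<xi>))\<^sup>2 else 0)" for k \<xi>
  define lam where "lam \<xi> = (\<Sum>j\<in>{1..<N}. lam_plus A B j * sqP (N - j) \<xi> + lam_minus A B j * sqQ (N - j) \<xi>)" for \<xi>
  have int_sq: "integrable M (sqP k)" "integrable M (sqQ k)" if "k \<le> N" for k
    unfolding sqP_def sqQ_def using integrable_half_line_norm_squares[OF t that] by auto
  have int_lam: "integrable M lam"
    unfolding lam_def using int_sq
    by (intro Bochner_Integration.integrable_sum Bochner_Integration.integrable_add integrable_mult_right) auto
  have int_rate: "integrable M rate"
    unfolding rate_def by (rule integrable_half_line_energy_rate[OF t])
  have "\<bar>rate \<xi> + lam \<xi>\<bar> \<le> remainder_const A B N * (sqP 0 \<xi> + sqQ 0 \<xi>)" for \<xi>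
  proof (cases "1 \<le> \<xi>")
    case True
    have "lam \<xi> = (\<Sum>j\<in>{1..<N}. \<xi> ^ (N - j) *
        (lam_plus A B j * (cmod (P t \<xi>))\<^sup>2 + lam_minus A B j * (cmod (Q t \<xi>))\<^sup>2))"
      unfolding lam_def sqP_def sqQ_def using True by (simp add: algebra_simps)
    then show ?thesis
      using energy_rate_lambda_bound[OF True N, of A B "P t \<xi>" "Q t \<xi>"] True
      unfolding rate_def sqP_def sqQ_def by simp
  qed (simp add: rate_def lam_def sqP_def sqQ_def)
  then have "\<bar>\<integral>\<xi>. rate \<xi> + lam \<xi> \<partial>M\<bar> \<le> (\<integral>\<xi>. remainder_const A B N * (sqP 0 \<xi> + sqQ 0 \<xi>) \<partial>M)"
    using int_rate int_lam int_sq by (intro integral_abs_bound_integral) auto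
  moreover have "(\<integral>\<xi>. rate \<xi> + lam \<xi> \<partial>M) = (\<integral>\<xi>. rate \<xi> \<partial>M)
      + (\<Sum>j\<in>{1..<N}. lam_plus A B j * (\<integral>\<xi>. sqP (N - j) \<xi> \<partial>M) + lam_minus A B j * (\<integral>\<xi>. sqQ (N - j) \<xi> \<partial>M))"
    using int_rate int_lam int_sq unfolding lam_def
    by (simp add: Bochner_Integration.integral_add Bochner_Integration.integral_sum)
  moreover have "(\<integral>\<xi>. remainder_const A B N * (sqP 0 \<xi> + sqQ 0 \<xi>) \<partial>M)
      = remainder_const A B N * ((\<integral>\<xi>. sqP 0 \<xi> \<partial>M) + (\<integral>\<xi>. sqQ 0 \<xi> \<partial>M))"
    using int_sq by (simp add: Bochner_Integration.integral_add)
  ultimately show ?thesis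
    unfolding rate_def[symmetric] sqP_def[symmetric] sqQ_def[symmetric]
    unfolding sqP_def sqQ_def power_0 mult_1 by (simp only:)
qed

lemma half_line_energy_estimate:
  assumes N: "N \<ge> 1" and t: "t \<in> J"
    and R: "remainder_const A B N * ((\<integral>\<xi>. (if 1 \<le> \<xi> then (cmod (P t \<xi>))\<^sup>2 else 0) \<partial>M)
                                    + (\<integral>\<xi>. (if 1 \<le> \<xi> then (cmod (Q t \<xi>))\<^sup>2 else 0) \<partial>M)) \<le> R"
  shows "\<exists>E'. ((\<lambda>s. (\<integral>\<xi>. (if 1 \<le> \<xi> then (cmod (P s \<xi>))\<^sup>2 else 0) \<partial>M)
              + (\<Sum>j\<in>{1..<N}. Re (alpha A B j *
                  (\<integral>\<xi>. (if 1 \<le> \<xi> then of_real (1 / \<xi> ^ j) * cnj (Q s \<xi>) * cnj (P s \<xi>) else 0) \<partial>M))))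
            has_real_derivative E') (at t)
        \<and> \<bar>E' + (\<Sum>j\<in>{1..<N}.
              lam_plus A B j * (\<integral>\<xi>. (if 1 \<le> \<xi> then \<xi> ^ (N - j) * (cmod (P t \<xi>))\<^sup>2 else 0) \<partial>M)
              + lam_minus A B j * (\<integral>\<xi>. (if 1 \<le> \<xi> then \<xi> ^ (N - j) * (cmod (Q t \<xi>))\<^sup>2 else 0) \<partial>M))\<bar>
          \<le> R"
proof (intro exI conjI)
  show "((\<lambda>s. (\<integral>\<xi>. (if 1 \<le> \<xi> then (cmod (P s \<xi>))\<^sup>2 else 0) \<partial>M)
              + (\<Sum>j\<in>{1..<N}. Re (alpha A B j *
                  (\<integral>\<xi>. (if 1 \<le> \<xi> then of_real (1 / \<xi> ^ j) * cnj (Q s \<xi>) * cnj (P s \<xi>) else 0) \<partial>M))))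
            has_real_derivative (\<integral>\<xi>. (if 1 \<le> \<xi> then energy_rate N A B \<xi> (P t \<xi>) (Q t \<xi>)
             (rhs_pos N A B \<xi> (P t \<xi>) (Q t \<xi>)) (rhs_neg N A B \<xi> (P t \<xi>) (Q t \<xi>)) else 0) \<partial>M)) (at t)"
    using has_real_derivative_half_line_energy[OF t] open_J t
    by (rule has_field_derivative_transform_within_open) (rule integral_half_line_energy_density(2))
qed (use abs_integral_half_line_energy_rate_le[OF N t] R in linarith)

end

section \<open>Reflection of the frequencies\<close>

lemma id_borel_measurable_freq [measurable]: "(\<lambda>\<xi>::real. \<xi>) \<in> borel_measurable (freq M)"
  by (cases M) auto

lemma uminus_in_space_freq: "\<xi> \<in> space (freq M) \<Longrightarrow> - \<xi> \<in> space (freq M)"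
  by (cases M) (auto simp: Ints_minus)

lemma uminus_measurable_freq [measurable]: "(uminus :: real \<Rightarrow> real) \<in> measurable (freq M) (freq M)"
proof (cases M)
  case Torus
  then show ?thesis
    by (auto simp: Ints_minus)
qed simp

lemma distr_freq_uminus: "distr (freq M) (freq M) uminus = freq M"
proof (cases M)
  case Line
  have "distr lborel lborel (uminus :: real \<Rightarrow> real) = distr lborel borel uminus"
    by (rule distr_cong) auto
  then show ?thesis
    using Line lborel_distr_uminus by simp
next
  case Torus
  have "bij_betw (uminus :: real \<Rightarrow> real) \<int> \<int>"
    by (rule bij_betwI[where g = uminus]) (auto simp: Ints_minus)
  then show ?thesis
    using Torus distr_bij_count_space by simp
qed

definition reflect :: "(real \<Rightarrow> 'a) \<Rightarrow> real \<Rightarrow> 'a" where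
  "reflect f = (\<lambda>\<xi>. f (- \<xi>))"

lemma reflect_reflect [simp]: "reflect (reflect f) = f"
  by (simp add: reflect_def fun_eq_iff)

lemma borel_measurable_reflect_iff:
  "reflect f \<in> borel_measurable (freq M) \<longleftrightarrow> f \<in> borel_measurable (freq M)"
proof -
  have "reflect f \<in> borel_measurable (freq M)" if "f \<in> borel_measurable (freq M)" for f :: "real \<Rightarrow> 'a"
    using measurable_compose[OF uminus_measurable_freq that] by (simp add: reflect_def)
  from this[of f] this[of "reflect f"] show ?thesis
    unfolding reflect_reflect by blast
qed

lemma integrable_reflect_iff:
  fixes f :: "real \<Rightarrow> 'b::{banach, second_countable_topology}"
  shows "integrable (freq M) (reflect f) \<longleftrightarrow> integrable (freq M) f"
proof (cases "f \<in> borel_measurable (freq M)")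
  case True
  then show ?thesis
    using integrable_distr_eq[OF uminus_measurable_freq True] distr_freq_uminus by (simp add: reflect_def)
next
  case False
  then show ?thesis
    using borel_measurable_reflect_iff by (metis borel_measurable_integrable)
qed

lemma integral_reflect:
  fixes f :: "real \<Rightarrow> 'b::{banach, second_countable_topology}"
  shows "(\<integral>\<xi>. reflect f \<xi> \<partial>freq M) = (\<integral>\<xi>. f \<xi> \<partial>freq M)"
proof (cases "f \<in> borel_measurable (freq M)")
  case True
  then show ?thesis
    using integral_distr[OF uminus_measurable_freq True] distr_freq_uminus by (simp add: reflect_def)
next
  case False
  then have "\<not> integrable (freq M) f" "\<not> integrable (freq M) (reflect f)"
    using borel_measurable_reflect_iff by (auto dest: borel_measurable_integrable)
  then show ?thesis
    by (simp add: not_integrable_integral_eq)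
qed

lemma Pplus_reflect: "Pplus (reflect f) = reflect (Pminus f)"
  by (auto simp: fun_eq_iff Pplus_def Pminus_def reflect_def)

lemma Pminus_reflect: "Pminus (reflect f) = reflect (Pplus f)"
  by (auto simp: fun_eq_iff Pplus_def Pminus_def reflect_def)

lemma conjF_reflect: "conjF (reflect f) = reflect (conjF f)"
  by (simp add: fun_eq_iff conjF_def reflect_def)

lemma absDx_reflect: "absDx s (reflect f) = reflect (absDx s f)"
  by (simp add: fun_eq_iff absDx_def reflect_def)

lemma Dx_reflect: "Dx n (reflect f) = (\<lambda>\<xi>. (-1) powi n * reflect (Dx n f) \<xi>)"
  by (simp add: fun_eq_iff Dx_def reflect_def power_int_minus_left)

lemma normsq_reflect: "normsq (freq M) (reflect f) = normsq (freq M) f"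
  using integral_reflect[where f = "\<lambda>\<xi>. (cmod (f \<xi>))\<^sup>2" and M = M] by (simp add: normsq_def reflect_def)

lemma inner_L2_Dx_reflect:
  "inner_L2 (freq M) (Dx (- int j) (reflect f)) (reflect g) = (-1) ^ j * inner_L2 (freq M) (Dx (- int j) f) g"
proof -
  have "inner_L2 (freq M) (Dx (- int j) (reflect f)) (reflect g)
      = (-1) ^ j * (\<integral>\<xi>. reflect (\<lambda>\<xi>. Dx (- int j) f \<xi> * cnj (g \<xi>)) \<xi> \<partial>freq M)"
    unfolding inner_L2_def Dx_reflect power_int_minus_one_minus
    by (simp add: reflect_def mult.assoc)
  then show ?thesis
    unfolding integral_reflect inner_L2_def .
qed

lemma normsq_Pplus:
  "normsq (freq M) (Pplus f) = (\<integral>\<xi>. (if 1 \<le> \<xi> then (cmod (f \<xi>))\<^sup>2 else 0) \<partial>freq M)"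
  unfolding normsq_def Pplus_def by (rule Bochner_Integration.integral_cong) auto

lemma powr_squared_eq_power:
  assumes "1 \<le> \<xi>" "j \<le> 2 * m"
  shows "(\<xi> powr (real m - real j / 2))\<^sup>2 = \<xi> ^ (2 * m - j)"
proof -
  have "(real m - real j / 2) + (real m - real j / 2) = real (2 * m - j)"
    using assms by (simp add: of_nat_diff)
  then have "(\<xi> powr (real m - real j / 2))\<^sup>2 = \<xi> powr real (2 * m - j)"
    unfolding power2_eq_square by (simp only: powr_add[symmetric])
  also have "\<dots> = \<xi> ^ (2 * m - j)"
    using assms by (intro powr_realpow) simp
  finally show ?thesis .
qed

lemma normsq_absDx_Pplus:
  assumes "j \<le> 2 * m"
  shows "normsq (freq M) (absDx (real m - real j / 2) (Pplus f))
           = (\<integral>\<xi>. (if 1 \<le> \<xi> then \<xi> ^ (2 * m - j) * (cmod (f \<xi>))\<^sup>2 else 0) \<partial>freq M)"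
  unfolding normsq_def
proof (rule Bochner_Integration.integral_cong)
  fix \<xi> :: real
  show "(cmod (absDx (real m - real j / 2) (Pplus f) \<xi>))\<^sup>2
      = (if 1 \<le> \<xi> then \<xi> ^ (2 * m - j) * (cmod (f \<xi>))\<^sup>2 else 0)"
  proof (cases "1 \<le> \<xi>")
    case True
    then have "\<bar>\<xi>\<bar> = \<xi>"
      by simp
    with True show ?thesis
      by (simp add: absDx_def Pplus_def norm_mult power_mult_distrib powr_squared_eq_power[OF True assms])
  qed (simp add: absDx_def Pplus_def)
qed simp

lemma normsq_absDx_Pminus:
  assumes "j \<le> 2 * m"
  shows "normsq (freq M) (absDx (real m - real j / 2) (Pminus f))
           = (\<integral>\<xi>. (if 1 \<le> \<xi> then \<xi> ^ (2 * m - j) * (cmod (f (- \<xi>)))\<^sup>2 else 0) \<partial>freq M)"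
  using normsq_absDx_Pplus[OF assms, of M "reflect f"]
  unfolding Pplus_reflect absDx_reflect normsq_reflect by (simp only: reflect_def)

lemma inner_L2_Pminus_Pplus:
  "inner_L2 (freq M) (Dx (- int j) (conjF (Pminus f))) (Pplus f)
     = (\<integral>\<xi>. (if 1 \<le> \<xi> then of_real (1 / \<xi> ^ j) * cnj (f (- \<xi>)) * cnj (f \<xi>) else 0) \<partial>freq M)"
  unfolding inner_L2_def
proof (rule Bochner_Integration.integral_cong)
  fix \<xi> :: real
  show "Dx (- int j) (conjF (Pminus f)) \<xi> * cnj (Pplus f \<xi>)
      = (if 1 \<le> \<xi> then of_real (1 / \<xi> ^ j) * cnj (f (- \<xi>)) * cnj (f \<xi>) else 0)"
    by (simp add: Dx_def conjF_def Pminus_def Pplus_def power_int_minus_divide)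
qed simp

lemma half_line_norms_le_normsq:
  assumes [measurable]: "f \<in> borel_measurable (freq M)" and int: "integrable (freq M) (\<lambda>\<xi>. (cmod (f \<xi>))\<^sup>2)"
  shows "(\<integral>\<xi>. (if 1 \<le> \<xi> then (cmod (f \<xi>))\<^sup>2 else 0) \<partial>freq M)
           + (\<integral>\<xi>. (if 1 \<le> \<xi> then (cmod (f (- \<xi>)))\<^sup>2 else 0) \<partial>freq M)
         \<le> normsq (freq M) f"
proof -
  define neg where "neg \<xi> = (if \<xi> \<le> -1 then (cmod (f \<xi>))\<^sup>2 else 0)" for \<xi> :: real
  have "(\<integral>\<xi>. (if 1 \<le> \<xi> then (cmod (f (- \<xi>)))\<^sup>2 else 0) \<partial>freq M) = (\<integral>\<xi>. neg \<xi> \<partial>freq M)"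
    using integral_reflect[where f = neg and M = M] unfolding neg_def reflect_def by simp
  moreover have int_pos: "integrable (freq M) (\<lambda>\<xi>. if 1 \<le> \<xi> then (cmod (f \<xi>))\<^sup>2 else 0)"
    by (rule Bochner_Integration.integrable_bound[OF int]) auto
  moreover have int_neg: "integrable (freq M) neg"
    unfolding neg_def by (rule Bochner_Integration.integrable_bound[OF int]) auto
  moreover have "(\<integral>\<xi>. (if 1 \<le> \<xi> then (cmod (f \<xi>))\<^sup>2 else 0) + neg \<xi> \<partial>freq M) \<le> normsq (freq M) f"
    unfolding normsq_def
    by (rule integral_mono[OF Bochner_Integration.integrable_add[OF int_pos int_neg] int]) (auto simp: neg_def)
  ultimately show ?thesis
    by simp
qed

section \<open>Alternating the signs of the coefficients\<close>

lemma cnj_minus_one_power_mult: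
  fixes c z :: complex
  assumes "k \<le> j"
  shows "cnj ((-1) ^ (j - k) * c) * ((-1) ^ k * z) = (-1) ^ j * (cnj c * z)"
proof -
  have "(-1 :: complex) ^ (j - k) * (-1) ^ k = (-1) ^ j"
    using assms by (simp add: power_add[symmetric])
  moreover have "cnj ((-1 :: complex) ^ (j - k) * c) = (-1) ^ (j - k) * cnj c"
    by simp
  ultimately show ?thesis
    by (metis mult.assoc mult.left_commute)
qed

lemma alpha_alt_sign: "alpha (alt_sign A) (alt_sign B) j = (-1) ^ j * alpha A B j"
  unfolding alt_sign_def
proof (induction j rule: less_induct)
  case (less j)
  have "alpha (\<lambda>k. (-1) ^ k * A k) (\<lambda>k. (-1) ^ k * B k) j
      = (-1) ^ j * B j - 1/2 * (\<Sum>k\<in>{1..<j}. (1 + (-1) ^ (j - k)) * cnj ((-1) ^ (j - k) * A (j - k)) * ((-1) ^ k * alpha A B k))"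
    unfolding alpha.simps[of "\<lambda>k. (-1) ^ k * A k" "\<lambda>k. (-1) ^ k * B k" j] using less by simp
  also have "(\<Sum>k\<in>{1..<j}. (1 + (-1) ^ (j - k)) * cnj ((-1) ^ (j - k) * A (j - k)) * ((-1) ^ k * alpha A B k))
      = (-1) ^ j * (\<Sum>k\<in>{1..<j}. (1 + (-1) ^ (j - k)) * cnj (A (j - k)) * alpha A B k)"
    unfolding sum_distrib_left
  proof (rule sum.cong[OF refl])
    fix k assume "k \<in> {1..<j}"
    then have "cnj ((-1) ^ (j - k) * A (j - k)) * ((-1) ^ k * alpha A B k) = (-1) ^ j * (cnj (A (j - k)) * alpha A B k)"
      by (intro cnj_minus_one_power_mult) simp
    then show "(1 + (-1) ^ (j - k)) * cnj ((-1) ^ (j - k) * A (j - k)) * ((-1) ^ k * alpha A B k)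
        = (-1) ^ j * ((1 + (-1) ^ (j - k)) * cnj (A (j - k)) * alpha A B k)"
      by (simp only: mult.assoc mult.left_commute[of "1 + _"])
  qed
  also have "(-1) ^ j * B j - 1/2 * ((-1) ^ j * (\<Sum>k\<in>{1..<j}. (1 + (-1) ^ (j - k)) * cnj (A (j - k)) * alpha A B k))
      = (-1) ^ j * alpha A B j"
    unfolding alpha.simps[of A B j] by (simp add: algebra_simps)
  finally show ?case .
qed

lemma Im_cnj_alt_sign_mult_alpha:
  assumes "k \<in> {1..<j}"
  shows "Im (cnj (alt_sign B (j - k)) * alpha (alt_sign A) (alt_sign B) k) = (-1) ^ j * Im (cnj (B (j - k)) * alpha A B k)"
proof -
  from assms have "k \<le> j"
    by simp
  show ?thesis
    unfolding alpha_alt_sign unfolding alt_sign_def cnj_minus_one_power_mult[OF \<open>k \<le> j\<close>]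
    by (rule Im_minus_one_power_mult)
qed

lemma lam_plus_alt_sign: "lam_plus (alt_sign A) (alt_sign B) j = (-1) ^ j * lam_plus A B j"
proof -
  have "(\<Sum>k\<in>{1..<j}. (-1) ^ (j - k + 1) * Im (cnj (alt_sign B (j - k)) * alpha (alt_sign A) (alt_sign B) k))
      = (-1) ^ j * (\<Sum>k\<in>{1..<j}. (-1) ^ (j - k + 1) * Im (cnj (B (j - k)) * alpha A B k))"
    unfolding sum_distrib_left
    by (rule sum.cong[OF refl]) (simp only: Im_cnj_alt_sign_mult_alpha mult.left_commute)
  moreover have "Im (alt_sign A j) = (-1) ^ j * Im (A j)"
    unfolding alt_sign_def by (rule Im_minus_one_power_mult)
  ultimately show ?thesis
    unfolding lam_plus_def by (simp add: algebra_simps)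
qed

lemma lam_minus_alt_sign: "lam_minus (alt_sign A) (alt_sign B) j = (-1) ^ j * lam_minus A B j"
proof -
  have "(\<Sum>k\<in>{1..<j}. Im (cnj (alt_sign B (j - k)) * alpha (alt_sign A) (alt_sign B) k))
      = (-1) ^ j * (\<Sum>k\<in>{1..<j}. Im (cnj (B (j - k)) * alpha A B k))"
    unfolding sum_distrib_left
    by (rule sum.cong[OF refl]) (simp only: Im_cnj_alt_sign_mult_alpha)
  then show ?thesis
    unfolding lam_minus_def by simp
qed

lemma remainder_const_alt_sign: "remainder_const (alt_sign A) (alt_sign B) N = remainder_const A B N"
  by (simp add: remainder_const_def alpha_alt_sign norm_mult norm_power)

definition evolution :: "nat \<Rightarrow> (nat \<Rightarrow> complex) \<Rightarrow> (nat \<Rightarrow> complex) \<Rightarrow> (real \<Rightarrow> complex) \<Rightarrow> real \<Rightarrow> complex" where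
  "evolution m a b f \<xi> =
     \<i> * (Dx (int (2 * m)) f \<xi>
          + (\<Sum>j=1..2 * m. a j * Dx (int (2 * m - j)) f \<xi> + b j * Dx (int (2 * m - j)) (conjF f) \<xi>))"

lemma Dx_of_nat: "Dx (int n) f \<xi> = of_real (\<xi> ^ n) * f \<xi>"
  by (simp add: Dx_def)

lemma evolution_eq_rhs_pos: "evolution m a b f \<xi> = rhs_pos (2 * m) a b \<xi> (f \<xi>) (f (- \<xi>))"
  unfolding evolution_def rhs_pos_def Dx_of_nat conjF_def by (simp add: algebra_simps)

lemma minus_one_power_diff_even:
  assumes "j \<le> 2 * m"
  shows "(-1 :: 'a::ring_1) ^ (2 * m - j) = (-1) ^ j"
proof -
  have "even (2 * m - j) \<longleftrightarrow> even j"
    using assms by auto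
  then show ?thesis
    by (cases "even j") auto
qed

lemma evolution_reflect:
  "evolution m (alt_sign a) (alt_sign b) (reflect f) \<xi> = evolution m a b f (- \<xi>)"
proof -
  have minus_power: "complex_of_real ((- \<xi>) ^ n) = (-1) ^ n * complex_of_real (\<xi> ^ n)" for n
    by (subst power_minus) simp
  have "alt_sign a j * Dx (int (2 * m - j)) (reflect f) \<xi> + alt_sign b j * Dx (int (2 * m - j)) (conjF (reflect f)) \<xi>
      = a j * Dx (int (2 * m - j)) f (- \<xi>) + b j * Dx (int (2 * m - j)) (conjF f) (- \<xi>)" if "j \<in> {1..2 * m}" for j
    using that unfolding Dx_of_nat conjF_reflect minus_power alt_sign_def
    by (simp add: reflect_def minus_one_power_diff_even del: of_real_power)
  moreover have "Dx (int (2 * m)) (reflect f) \<xi> = Dx (int (2 * m)) f (- \<xi>)"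
    unfolding Dx_of_nat by (simp add: reflect_def)
  ultimately show ?thesis
    unfolding evolution_def by simp
qed

lemma evolution_uminus_eq_rhs_neg: "evolution m a b f (- \<xi>) = rhs_neg (2 * m) a b \<xi> (f \<xi>) (f (- \<xi>))"
proof -
  have "evolution m a b f (- \<xi>) = evolution m (alt_sign a) (alt_sign b) (reflect f) \<xi>"
    by (rule evolution_reflect[symmetric])
  also have "\<dots> = rhs_neg (2 * m) a b \<xi> (f \<xi>) (f (- \<xi>))"
    unfolding evolution_eq_rhs_pos rhs_neg_eq_rhs_pos_alt_sign by (simp add: reflect_def)
  finally show ?thesis .
qed

text \<open>The hypotheses of the theorem on \<open>v\<close>, apart from \<open>t \<in> J\<close>.\<close>

definition regular_solution ::
    "domain \<Rightarrow> nat \<Rightarrow> (nat \<Rightarrow> complex) \<Rightarrow> (nat \<Rightarrow> complex) \<Rightarrow> real set \<Rightarrow> (real \<Rightarrow> real \<Rightarrow> complex) \<Rightarrow> (real \<Rightarrow> real) \<Rightarrow> bool" where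
  "regular_solution M m a b J v g \<longleftrightarrow>
     open J
     \<and> (\<forall>s\<in>J. v s \<in> borel_measurable (freq M))
     \<and> (\<forall>s\<in>J. \<forall>\<xi>\<in>space (freq M). ((\<lambda>\<tau>. v \<tau> \<xi>) has_vector_derivative evolution m a b (v s) \<xi>) (at s))
     \<and> g \<in> borel_measurable (freq M)
     \<and> integrable (freq M) (\<lambda>\<xi>. (1 + \<bar>\<xi>\<bar>) ^ (4 * m) * (g \<xi>)\<^sup>2)
     \<and> (\<forall>s\<in>J. \<forall>\<xi>\<in>space (freq M). cmod (v s \<xi>) \<le> g \<xi>)"

lemma regular_solution_reflect:
  assumes "regular_solution M m a b J v g"
  shows "regular_solution M m (alt_sign a) (alt_sign b) J (\<lambda>s. reflect (v s)) (reflect g)"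
proof -
  have "integrable (freq M) (reflect (\<lambda>\<xi>. (1 + \<bar>\<xi>\<bar>) ^ (4 * m) * (g \<xi>)\<^sup>2))"
    using assms unfolding regular_solution_def integrable_reflect_iff by blast
  then show ?thesis
    using assms uminus_in_space_freq
    unfolding regular_solution_def evolution_reflect borel_measurable_reflect_iff
    by (auto simp: reflect_def)
qed

lemma regular_solution_dominated:
  assumes sol: "regular_solution M m a b J v g" and "s \<in> J" "\<xi> \<in> space (freq M)" "1 \<le> \<xi>"
  shows "\<xi> ^ (2 * m) * ((cmod (v s \<xi>))\<^sup>2 + (cmod (v s (- \<xi>)))\<^sup>2)
           \<le> (1 + \<bar>\<xi>\<bar>) ^ (4 * m) * ((g \<xi>)\<^sup>2 + (g (- \<xi>))\<^sup>2)"
proof -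
  have "\<xi> ^ (2 * m) \<le> (1 + \<bar>\<xi>\<bar>) ^ (4 * m)"
    using assms(4) by (intro order_trans[OF power_mono power_increasing]) auto
  moreover have "(cmod (v s \<xi>))\<^sup>2 + (cmod (v s (- \<xi>)))\<^sup>2 \<le> (g \<xi>)\<^sup>2 + (g (- \<xi>))\<^sup>2"
    using sol assms(2,3) uminus_in_space_freq[OF assms(3)] unfolding regular_solution_def
    by (intro add_mono power_mono) auto
  ultimately show ?thesis
    using assms(4) by (intro mult_mono) auto
qed

lemma regular_solution_integrable_weight:
  assumes "regular_solution M m a b J v g"
  shows "integrable (freq M) (\<lambda>\<xi>. (1 + \<bar>\<xi>\<bar>) ^ (4 * m) * ((g \<xi>)\<^sup>2 + (g (- \<xi>))\<^sup>2))"
proof -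
  have weighted: "integrable (freq M) (\<lambda>\<xi>. (1 + \<bar>\<xi>\<bar>) ^ (4 * m) * (g \<xi>)\<^sup>2)"
    using assms unfolding regular_solution_def by blast
  moreover from this have "integrable (freq M) (reflect (\<lambda>\<xi>. (1 + \<bar>\<xi>\<bar>) ^ (4 * m) * (g \<xi>)\<^sup>2))"
    unfolding integrable_reflect_iff .
  ultimately show ?thesis
    unfolding reflect_def distrib_left by simp
qed

lemma regular_solution_integrable_norm_squared:
  assumes sol: "regular_solution M m a b J v g" and t: "t \<in> J"
  shows "integrable (freq M) (\<lambda>\<xi>. (cmod (v t \<xi>))\<^sup>2)"
proof (rule Bochner_Integration.integrable_bound)
  show "integrable (freq M) (\<lambda>\<xi>. (1 + \<bar>\<xi>\<bar>) ^ (4 * m) * (g \<xi>)\<^sup>2)"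
    using sol unfolding regular_solution_def by blast
  show "AE \<xi> in freq M. norm ((cmod (v t \<xi>))\<^sup>2) \<le> norm ((1 + \<bar>\<xi>\<bar>) ^ (4 * m) * (g \<xi>)\<^sup>2)"
  proof (rule AE_I2)
    fix \<xi> assume \<xi>: "\<xi> \<in> space (freq M)"
    have "(cmod (v t \<xi>))\<^sup>2 \<le> 1 * (g \<xi>)\<^sup>2"
      using sol t \<xi> unfolding regular_solution_def by (simp add: power_mono)
    also have "\<dots> \<le> (1 + \<bar>\<xi>\<bar>) ^ (4 * m) * (g \<xi>)\<^sup>2"
      by (intro mult_right_mono) simp_all
    finally show "norm ((cmod (v t \<xi>))\<^sup>2) \<le> norm ((1 + \<bar>\<xi>\<bar>) ^ (4 * m) * (g \<xi>)\<^sup>2)"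
      by simp
  qed
qed (use sol t in \<open>auto simp: regular_solution_def\<close>)

lemma energy_estimate_Pplus:
  assumes sol: "regular_solution M m a b J v g" and m: "m \<ge> 1" and t: "t \<in> J"
    and C: "remainder_const a b (2 * m) \<le> C"
  shows "\<exists>Q'. ((\<lambda>s. normsq (freq M) (Pplus (v s))
               + (\<Sum>j=1..2*m-1. Re (alpha a b j *
                    inner_L2 (freq M) (Dx (- int j) (conjF (Pminus (v s)))) (Pplus (v s)))))
            has_real_derivative Q') (at t)
       \<and> \<bar>Q' + (\<Sum>j=1..2*m-1.
              lam_plus a b j * normsq (freq M) (absDx (real m - real j / 2) (Pplus (v t)))
            + lam_minus a b j * normsq (freq M) (absDx (real m - real j / 2) (Pminus (v t))))\<bar>
         \<le> C * normsq (freq M) (v t)"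
proof -
  have J: "open J"
    and v_meas: "\<And>s. s \<in> J \<Longrightarrow> v s \<in> borel_measurable (freq M)"
    and v_reflect_meas: "\<And>s. s \<in> J \<Longrightarrow> (\<lambda>\<xi>. v s (- \<xi>)) \<in> borel_measurable (freq M)"
    using sol borel_measurable_reflect_iff[of "v _" M] by (auto simp: regular_solution_def reflect_def)
  have solves: "((\<lambda>\<tau>. v \<tau> \<xi>) has_vector_derivative rhs_pos (2 * m) a b \<xi> (v s \<xi>) (v s (- \<xi>))) (at s)"
    "((\<lambda>\<tau>. v \<tau> (- \<xi>)) has_vector_derivative rhs_neg (2 * m) a b \<xi> (v s \<xi>) (v s (- \<xi>))) (at s)"
    if "s \<in> J" "\<xi> \<in> space (freq M)" for s \<xi>
    using sol that uminus_in_space_freq[OF that(2)]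
    unfolding regular_solution_def evolution_eq_rhs_pos[symmetric] evolution_uminus_eq_rhs_neg[symmetric] by auto
  have R: "remainder_const a b (2 * m) * ((\<integral>\<xi>. (if 1 \<le> \<xi> then (cmod (v t \<xi>))\<^sup>2 else 0) \<partial>freq M)
                                     + (\<integral>\<xi>. (if 1 \<le> \<xi> then (cmod (v t (- \<xi>)))\<^sup>2 else 0) \<partial>freq M))
      \<le> C * normsq (freq M) (v t)"
    using half_line_norms_le_normsq[OF v_meas[OF t] regular_solution_integrable_norm_squared[OF sol t]]
      remainder_const_nonneg[of a b "2 * m"] C
    by (intro mult_mono) (auto intro!: add_nonneg_nonneg Bochner_Integration.integral_nonneg)
  have N: "1 \<le> 2 * m" and indices: "{1..2 * m - 1} = {1..<2 * m}"
    using m by auto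
  show ?thesis
    using half_line_energy_estimate[where P = v and Q = "\<lambda>s \<xi>. v s (- \<xi>)",
        OF id_borel_measurable_freq J v_meas v_reflect_meas regular_solution_integrable_weight[OF sol]
          regular_solution_dominated[OF sol] solves N t R] indices
    by (simp add: normsq_Pplus inner_L2_Pminus_Pplus normsq_absDx_Pplus normsq_absDx_Pminus)
qed

text \<open>\<open>v s (- \<xi>)\<close> solves the equation with coefficients \<open>(-1) ^ j * a j\<close>, \<open>(-1) ^ j * b j\<close>;
  this multiplies \<open>alpha\<close>, \<open>lam_plus\<close>, \<open>lam_minus\<close> by
  \<open>(-1) ^ j\<close> and exchanges \<open>Pplus\<close> and \<open>Pminus\<close>, so the first estimate turns into the second.\<close>

lemma energy_estimate_Pminus:
  assumes sol: "regular_solution M m a b J v g" and m: "m \<ge> 1" and t: "t \<in> J"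
    and C: "remainder_const a b (2 * m) \<le> C"
  shows "\<exists>Q'. ((\<lambda>s. normsq (freq M) (Pminus (v s))
               + (\<Sum>j=1..2*m-1. Re (alpha a b j *
                    inner_L2 (freq M) (Dx (- int j) (conjF (Pplus (v s)))) (Pminus (v s)))))
            has_real_derivative Q') (at t)
       \<and> \<bar>Q' + (\<Sum>j=1..2*m-1. (-1) ^ j * (
              lam_plus a b j * normsq (freq M) (absDx (real m - real j / 2) (Pminus (v t)))
            + lam_minus a b j * normsq (freq M) (absDx (real m - real j / 2) (Pplus (v t)))))\<bar>
         \<le> C * normsq (freq M) (v t)"
proof -
  have alpha_factor: "alpha (alt_sign a) (alt_sign b) j * ((-1) ^ j * z) = alpha a b j * z" for j z
    by (simp add: alpha_alt_sign)
  have lam_factor: "lam_plus (alt_sign a) (alt_sign b) j * x + lam_minus (alt_sign a) (alt_sign b) j * y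
      = (-1) ^ j * (lam_plus a b j * x + lam_minus a b j * y)" for j x y
    by (simp add: lam_plus_alt_sign lam_minus_alt_sign algebra_simps)
  from energy_estimate_Pplus[OF regular_solution_reflect[OF sol] m t] C
  show ?thesis
    unfolding Pplus_reflect Pminus_reflect conjF_reflect inner_L2_Dx_reflect absDx_reflect normsq_reflect
      alpha_factor lam_factor remainder_const_alt_sign
    by simp
qed

theorem lemma2p1:
  fixes m :: nat and a b :: "nat \<Rightarrow> complex"
  assumes "m \<ge> 1"
  shows "\<exists>C::real>0. \<forall>M::domain. \<forall>J::real set. \<forall>v::real \<Rightarrow> real \<Rightarrow> complex. \<forall>g::real \<Rightarrow> real. \<forall>t::real.
    open J \<and> t \<in> J
    \<and> (\<forall>s\<in>J. v s \<in> borel_measurable (freq M))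
    \<and> (\<forall>s\<in>J. \<forall>\<xi>\<in>space (freq M).
          ((\<lambda>\<tau>. v \<tau> \<xi>) has_vector_derivative
             \<i> * (Dx (int (2*m)) (v s) \<xi>
                  + (\<Sum>j=1..2*m. a j * Dx (int (2*m - j)) (v s) \<xi>
                                + b j * Dx (int (2*m - j)) (conjF (v s)) \<xi>))) (at s))
    \<and> g \<in> borel_measurable (freq M)
    \<and> integrable (freq M) (\<lambda>\<xi>. (1 + \<bar>\<xi>\<bar>) ^ (4*m) * (g \<xi>)\<^sup>2)
    \<and> (\<forall>s\<in>J. \<forall>\<xi>\<in>space (freq M). cmod (v s \<xi>) \<le> g \<xi>)
    \<longrightarrow>
    (\<exists>Q'. ((\<lambda>s. normsq (freq M) (Pplus (v s))
               + (\<Sum>j=1..2*m-1. Re (alpha a b j *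
                    inner_L2 (freq M) (Dx (- int j) (conjF (Pminus (v s)))) (Pplus (v s)))))
            has_real_derivative Q') (at t)
       \<and> \<bar>Q' + (\<Sum>j=1..2*m-1.
              lam_plus a b j * normsq (freq M) (absDx (real m - real j / 2) (Pplus (v t)))
            + lam_minus a b j * normsq (freq M) (absDx (real m - real j / 2) (Pminus (v t))))\<bar>
         \<le> C * normsq (freq M) (v t))
    \<and>
    (\<exists>Q'. ((\<lambda>s. normsq (freq M) (Pminus (v s))
               + (\<Sum>j=1..2*m-1. Re (alpha a b j *
                    inner_L2 (freq M) (Dx (- int j) (conjF (Pplus (v s)))) (Pminus (v s)))))
            has_real_derivative Q') (at t)
       \<and> \<bar>Q' + (\<Sum>j=1..2*m-1. (-1) ^ j * (
              lam_plus a b j * normsq (freq M) (absDx (real m - real j / 2) (Pminus (v t)))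
            + lam_minus a b j * normsq (freq M) (absDx (real m - real j / 2) (Pplus (v t)))))\<bar>
         \<le> C * normsq (freq M) (v t))"
proof (rule exI[of _ "remainder_const a b (2 * m) + 1"], intro conjI allI impI)
  show "remainder_const a b (2 * m) + 1 > 0"
    using remainder_const_nonneg[of a b "2 * m"] by linarith
qed ((rule energy_estimate_Pplus[OF _ assms] energy_estimate_Pminus[OF _ assms];
      auto simp: regular_solution_def evolution_def)+)

end
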